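(* Fix a cooperative Markov game, target and avoid sets, and a stationary joint policy $\pi$ with $v^{full}>0$, as described in the context. Let $p\in[0,1]$. Suppose the loss time in imaginary play (Algorithm 1) is random, independent of the game's randomness, with $\Pr(t_{loss}=t)=(1-p)^tp$ for $t=0,1,2,\dots$. Let $v^{img}$ be the resulting reach-avoid probability. Then $$v^{img}\ge\max\Big(v^{full}-\sqrt{1-\exp(-C_\pi)},\;v^{full}(1-p)^{\,l^{full}/v^{full}}\Big).$$
   Context: Multiagent model: there are $N$ agents. Agent $i$ is modeled by a finite MDP $\mathcal{M}^i=(\mathcal{S}^i,s_I^i,\mathcal{A}^i,\mathcal{T}^i)$. Here $\mathcal{S}^i$ is a finite state set, $s_I^i\in\mathcal{S}^i$ is the initial state, $\mathcal{A}^i$ is a finite action set, and $\mathcal{T}^i:\mathcal{S}^i\times\mathcal{A}^i\to\Delta(\mathcal{S}^i)$ is the transition kernel. The cooperative Markov game has joint state set $\mathbf{S}=\prod_i\mathcal{S}^i$, joint initial state $\mathbf{s}_I=(s_I^1,\dots,s_I^N)$, and joint action set $\mathbf{A}=\prod_i\mathcal{A}^i$. Its transition kernel is $\mathbf{T}(\mathbf{s},\mathbf{a},\mathbf{y})=\prod_{i}\mathcal{T}^i(s^i,a^i,y^i)$. A stationary joint policy is a map $\pi:\mathbf{S}\to\Delta(\mathbf{A})$. A joint path is an infinite sequence $\mathbf{s}_0\mathbf{a}_0\mathbf{s}_1\mathbf{a}_1\cdots\in(\mathbf{S}\times\mathbf{A})^\omega$ with $\mathbf{s}_0=\mathbf{s}_I$.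 All random sampling below is mutually independent given the stated conditioning. Full-communication execution: at each time $t$, $\mathbf{a}_t\sim\pi(\mathbf{s}_t)$ is drawn once for the whole team. Each agent $i$ then moves to $s^i_{t+1}\sim\mathcal{T}^i(s^i_t,a^i_t)$. $\Gamma^{full}$ denotes the resulting distribution over joint paths. Imaginary play with loss time $t_{loss}\in\{0,1,\dots\}\cup\{\infty\}$ (Algorithm 1): - For $t<t_{loss}$, the team acts exactly as under full communication. Each agent $i$ records $\hat s^j_{t,i}=s^j_t$ for all $j\ne i$, and records $\hat{\mathbf a}_{t,i}=\mathbf a_t$. - For $t\ge t_{loss}$, each agent $i$ acts separately and does not observe the others. First it sets its imaginary teammate states. If $t=0$, it sets $\hat s^j_{0,i}=s_I^j$ for $j\neq i$. Otherwise it samples $\hat s^j_{t,i}\sim\mathcal{T}^j(\hat s^j_{t-1,i},\hat a^j_{t-1,i})$ for $j\ne i$, where $\hat a^j_{t-1,i}$ is the $j$-th component of $\hat{\mathbf a}_{t-1,i}$. - Agent $i$ then samples its own joint action $\hat{\mathbf a}_{t,i}\sim\pi(\hat s^1_{t,i},\dots,\hat s^{i-1}_{t,i},s^i_t,\hat s^{i+1}_{t,i},\dots,\hat s^N_{t,i})$. - Agent $i$ executes only its own component $\hat a^i_{t,i}$, and moves to $s^i_{t+1}\sim\mathcal{T}^i(s^i_t,\hat a^i_{t,i})$. - The realized joint action at time $t$ is $\mathbf a_t=(\hat a^1_{t,1},\dots,\hat a^N_{t,N})$. $\Gamma^{img}_{t_{loss}}$ denotes the induced distribution over realized joint paths. Total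 correlation: let $\mathbf X$ be the random joint path under $\Gamma^{full}$, and $X^i$ its projection $s^i_0a^i_0s^i_1a^i_1\cdots$ onto agent $i$. The total correlation of $\pi$ is $$C_\pi=\Big[\sum_{i=1}^N H(X^i)\Big]-H(\mathbf X)=KL(\Gamma^{full}\|\Gamma^{img}_0).$$ The equality holds because $\Gamma^{img}_0$ is the product of the agents' marginal path distributions under $\Gamma^{full}$. Reach-avoid objective: a target set $\mathbf S_{\mathcal T}\subseteq\mathbf S$ and an avoid set $\mathbf S_{\mathcal A}\subseteq\mathbf S$ are given. A joint path succeeds if there is $M$ with $\mathbf s_M\in\mathbf S_{\mathcal T}$ and $\mathbf s_t\notin\mathbf S_{\mathcal A}$ for all $t<M$. $v^{full}$ is the success probability under $\Gamma^{full}$. Path length: $\mathbf S_{\mathcal D}$ is the set of joint states from which, under $\pi$ with full communication, the probability of success is $0$. For a path $\xi$, $len(\xi)=\min\{t+1:\mathbf s_t\in\mathbf S_{\mathcal T}\cup\mathbf S_{\mathcal D}\}$. Finally, $l^{full}=\mathbb E_{\xi\sim\Gamma^{full}}[len(\xi)]$. *)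

theory Defs
  imports "HOL-Probability.Probability"
begin

(* T i s a is the transition kernel T^i(s,a); pol is the stationary joint policy pi.
   A (finite) path prefix of length n is the list [(s_0,a_0),...,(s_(n-1),a_(n-1))]. *)

type_synonym ('i,'s,'a) prefix = "(('i \<Rightarrow> 's) \<times> ('i \<Rightarrow> 'a)) list"

definition joint_step ::
  "('i::finite \<Rightarrow> 's \<Rightarrow> 'a \<Rightarrow> 's pmf) \<Rightarrow> ('i \<Rightarrow> 's) \<Rightarrow> ('i \<Rightarrow> 'a) \<Rightarrow> ('i \<Rightarrow> 's) pmf" where
  "joint_step T s a = Pi_pmf UNIV undefined (\<lambda>i. T i (s i) (a i))"

primrec full_prefix ::
  "('i::finite \<Rightarrow> 's \<Rightarrow> 'a \<Rightarrow> 's pmf) \<Rightarrow> (('i \<Rightarrow> 's) \<Rightarrow> ('i \<Rightarrow> 'a) pmf) \<Rightarrow> nat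
   \<Rightarrow> ('i \<Rightarrow> 's) \<Rightarrow> ('i,'s,'a) prefix pmf" where
  "full_prefix T pol 0 s = return_pmf []"
| "full_prefix T pol (Suc n) s =
     bind_pmf (pol s) (\<lambda>a. bind_pmf (joint_step T s a) (\<lambda>s'.
     bind_pmf (full_prefix T pol n s') (\<lambda>rest. return_pmf ((s, a) # rest))))"

(* Agent i acting separately after the loss time.  sh is agent i's current imagined
   joint state \<hat>s_{t,i} (its own component sh i is its real state s^i_t).
   It samples its joint action \<hat>a_{t,i} ~ pi(sh), executes component i (real move
   s^i_{t+1} ~ T^i(s^i_t, \<hat>a^i_{t,i})) and imagines the teammates' next states
   \<hat>s^j_{t+1,i} ~ T^j(\<hat>s^j_{t,i}, \<hat>a^j_{t,i}); all sampled independently. *)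
primrec agent_run ::
  "('i::finite \<Rightarrow> 's \<Rightarrow> 'a \<Rightarrow> 's pmf) \<Rightarrow> (('i \<Rightarrow> 's) \<Rightarrow> ('i \<Rightarrow> 'a) pmf) \<Rightarrow> 'i \<Rightarrow> nat
   \<Rightarrow> ('i \<Rightarrow> 's) \<Rightarrow> ('s \<times> 'a) list pmf" where
  "agent_run T pol i 0 sh = return_pmf []"
| "agent_run T pol i (Suc n) sh =
     bind_pmf (pol sh) (\<lambda>ah. bind_pmf (joint_step T sh ah) (\<lambda>sh'.
     bind_pmf (agent_run T pol i n sh') (\<lambda>rest. return_pmf ((sh i, ah i) # rest))))"

(* all agents act separately and independently for n steps; B i is agent i's imagined
   joint state at the current time (with B i i its real state).  The realized joint
   path collects the own components. *)
definition indep_phase ::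
  "('i::finite \<Rightarrow> 's \<Rightarrow> 'a \<Rightarrow> 's pmf) \<Rightarrow> (('i \<Rightarrow> 's) \<Rightarrow> ('i \<Rightarrow> 'a) pmf) \<Rightarrow> nat
   \<Rightarrow> ('i \<Rightarrow> 'i \<Rightarrow> 's) \<Rightarrow> ('i,'s,'a) prefix pmf" where
  "indep_phase T pol n B =
     map_pmf (\<lambda>trs. map (\<lambda>t. (\<lambda>i. fst (trs i ! t), \<lambda>i. snd (trs i ! t))) [0..<n])
       (Pi_pmf UNIV undefined (\<lambda>i. agent_run T pol i n (B i)))"

(* imaginary play with loss time Suc k >= 1: full communication at times 0..k, then
   at time Suc k each agent i samples its imagined teammate states
   \<hat>s^j ~ T^j(s^j_k, a^j_k) (independently of everything else), keeps its real
   state, and continues separately. *)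
primrec loss_prefix ::
  "('i::finite \<Rightarrow> 's \<Rightarrow> 'a \<Rightarrow> 's pmf) \<Rightarrow> (('i \<Rightarrow> 's) \<Rightarrow> ('i \<Rightarrow> 'a) pmf) \<Rightarrow> nat \<Rightarrow> nat
   \<Rightarrow> ('i \<Rightarrow> 's) \<Rightarrow> ('i,'s,'a) prefix pmf" where
  "loss_prefix T pol k 0 s = return_pmf []"
| "loss_prefix T pol k (Suc n) s =
     bind_pmf (pol s) (\<lambda>a. bind_pmf (joint_step T s a) (\<lambda>s'.
     bind_pmf
       (case k of
          0 \<Rightarrow> bind_pmf (Pi_pmf UNIV undefined (\<lambda>i. joint_step T s a))
                 (\<lambda>imag. indep_phase T pol n (\<lambda>i. (imag i)(i := s' i)))
        | Suc k' \<Rightarrow> loss_prefix T pol k' n s')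
       (\<lambda>rest. return_pmf ((s, a) # rest))))"

(* imaginary play (Algorithm 1) with loss time L (None = infinity), first n steps *)
definition img_prefix ::
  "('i::finite \<Rightarrow> 's \<Rightarrow> 'a \<Rightarrow> 's pmf) \<Rightarrow> (('i \<Rightarrow> 's) \<Rightarrow> ('i \<Rightarrow> 'a) pmf) \<Rightarrow> ('i \<Rightarrow> 's)
   \<Rightarrow> nat option \<Rightarrow> nat \<Rightarrow> ('i,'s,'a) prefix pmf" where
  "img_prefix T pol sI L n =
     (case L of
        None \<Rightarrow> full_prefix T pol n sI
      | Some 0 \<Rightarrow> indep_phase T pol n (\<lambda>i. sI)
      | Some (Suc k) \<Rightarrow> loss_prefix T pol k n sI)"

(* random loss time: Pr(t_loss = t) = (1-p)^t p; for p = 0 this gives t_loss = infinity a.s. *)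
definition loss_dist :: "real \<Rightarrow> nat option pmf" where
  "loss_dist p = (if p = 0 then return_pmf None else map_pmf Some (geometric_pmf p))"

definition img_geo_prefix ::
  "('i::finite \<Rightarrow> 's \<Rightarrow> 'a \<Rightarrow> 's pmf) \<Rightarrow> (('i \<Rightarrow> 's) \<Rightarrow> ('i \<Rightarrow> 'a) pmf) \<Rightarrow> ('i \<Rightarrow> 's)
   \<Rightarrow> real \<Rightarrow> nat \<Rightarrow> ('i,'s,'a) prefix pmf" where
  "img_geo_prefix T pol sI p n = bind_pmf (loss_dist p) (\<lambda>L. img_prefix T pol sI L n)"

definition succ_prefix :: "('i \<Rightarrow> 's) set \<Rightarrow> ('i \<Rightarrow> 's) set \<Rightarrow> ('i,'s,'a) prefix \<Rightarrow> bool" where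
  "succ_prefix ST SA xs \<longleftrightarrow>
     (\<exists>M < length xs. fst (xs ! M) \<in> ST \<and> (\<forall>t < M. fst (xs ! t) \<notin> SA))"

(* probability of the (open) reach-avoid event of the path distribution whose
   length-n prefix distributions are P n: the limit (supremum) over the increasing
   cylinder events "success by time n-1" *)
definition reach_prob ::
  "('i \<Rightarrow> 's) set \<Rightarrow> ('i \<Rightarrow> 's) set \<Rightarrow> (nat \<Rightarrow> ('i,'s,'a) prefix pmf) \<Rightarrow> real" where
  "reach_prob ST SA P = (SUP n. measure_pmf.prob (P n) {xs. succ_prefix ST SA xs})"

definition v_full where
  "v_full T pol sI ST SA = reach_prob ST SA (\<lambda>n. full_prefix T pol n sI)"

definition v_img where
  "v_img T pol sI ST SA p = reach_prob ST SA (\<lambda>n. img_geo_prefix T pol sI p n)"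

definition dead_set where
  "dead_set T pol ST SA = {s. reach_prob ST SA (\<lambda>n. full_prefix T pol n s) = 0}"

(* min(len(xi), n) computed from the length-n prefix *)
definition trunc_len :: "('i \<Rightarrow> 's) set \<Rightarrow> nat \<Rightarrow> ('i,'s,'a) prefix \<Rightarrow> nat" where
  "trunc_len TD n xs =
     (if \<exists>t < n. fst (xs ! t) \<in> TD then Suc (LEAST t. fst (xs ! t) \<in> TD) else n)"

(* l^full = E[len] = sup_n E[min(len,n)]  (monotone convergence) *)
definition l_full :: "_ \<Rightarrow> _ \<Rightarrow> _ \<Rightarrow> _ \<Rightarrow> _ \<Rightarrow> ennreal" where
  "l_full T pol sI ST SA =
     (SUP n. \<integral>\<^sup>+ xs. of_nat (trunc_len (ST \<union> dead_set T pol ST SA) n xs)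
              \<partial>measure_pmf (full_prefix T pol n sI))"

definition entropy_pmf :: "'x pmf \<Rightarrow> real" where
  "entropy_pmf P = (\<Sum>x\<in>set_pmf P. - pmf P x * ln (pmf P x))"

definition tc_prefix where
  "tc_prefix T pol sI n =
     (\<Sum>i\<in>UNIV. entropy_pmf (map_pmf (map (\<lambda>(s, a). (s i, a i))) (full_prefix T pol n sI)))
     - entropy_pmf (full_prefix T pol n sI)"

(* C_pi for infinite paths: limit (supremum) of the prefix total correlations; may be infinite *)
definition total_corr :: "_ \<Rightarrow> _ \<Rightarrow> _ \<Rightarrow> ereal" where
  "total_corr T pol sI = (SUP n. ereal (tc_prefix T pol sI n))"

definition exp_neg :: "ereal \<Rightarrow> real" where
  "exp_neg C = (if C = \<infinity> then 0 else exp (- real_of_ereal C))"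

end

theory Submission
  imports Defs
begin

text \<open>
  Bound 1 compares the full-communication prefix distribution with imaginary play through
  the inequality \<open>P(E) - Q(E) \<le> sqrt (1 - exp (-KL(P\<parallel>Q)))\<close> (via the Bhattacharyya
  coefficient). Whatever the loss time, the imaginary-play prefix is the full-communication
  prefix up to the loss, followed by the product of the agents' conditional marginals; by
  Gibbs' inequality its KL divergence from the full prefix is at most the total correlation.

  Bound 2 uses that imaginary play with loss time \<open>t\<close> has the same state process as full
  communication up to time \<open>t + 1\<close>, so a path that succeeds at time \<open>M \<le> t\<close> under full
  communication succeeds with the same probability. Averaging over the geometric loss time
  gives \<open>v\<^sup>i\<^sup>m\<^sup>g \<ge> E[1{success} (1 - p)\<^sup>M]\<close>, and Jensen's inequality with
  \<open>E[M; success] \<le> l\<^sup>f\<^sup>u\<^sup>l\<^sup>l\<close> yields the claim. Finiteness of \<open>l\<^sup>f\<^sup>u\<^sup>l\<^sup>l\<close> comes from a uniform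
  geometric decay of the probability of avoiding the target and dead states.
\<close>

section \<open>Finitely supported distributions\<close>

lemma integral_bind_pmf_finite:
  fixes f :: "'b \<Rightarrow> real"
  assumes fin: "finite (set_pmf (bind_pmf M N))"
  shows "(\<integral>x. f x \<partial>measure_pmf (bind_pmf M N)) = (\<integral>y. (\<integral>x. f x \<partial>measure_pmf (N y)) \<partial>measure_pmf M)"
proof -
  define S where "S = set_pmf (bind_pmf M N)"
  define g where "g = (\<lambda>x. if x \<in> S then f x else 0)"
  define B where "B = (\<Sum>x\<in>S. \<bar>f x\<bar>)"
  have gB: "\<bar>g x\<bar> \<le> B" for x
    unfolding g_def B_def using fin S_def
    by (auto intro: member_le_sum[where f="\<lambda>x. \<bar>f x\<bar>"])
  have "(\<integral>x. f x \<partial>measure_pmf (bind_pmf M N)) = (\<integral>x. g x \<partial>measure_pmf (bind_pmf M N))"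
    by (intro integral_cong_AE) (auto simp: AE_measure_pmf_iff g_def S_def)
  also have "\<dots> = (\<integral>y. (\<integral>x. g x \<partial>measure_pmf (N y)) \<partial>measure_pmf M)"
    unfolding measure_pmf_bind
    by (rule integral_bind[where K="count_space UNIV" and B=B and B'=1])
       (auto simp: gB measure_pmf_in_subprob_algebra intro!: prob_space.finite_measure prob_space_measure_pmf
             measurable_pmf_measure1 measure_pmf.emeasure_space_le_1)
  also have "\<dots> = (\<integral>y. (\<integral>x. f x \<partial>measure_pmf (N y)) \<partial>measure_pmf M)"
    by (intro integral_cong_AE) (auto simp: AE_measure_pmf_iff g_def S_def intro!: integral_cong_AE)
  finally show ?thesis .
qed

lemma integral_pmf_finite:
  fixes f :: "'b \<Rightarrow> real"
  assumes "finite (set_pmf M)"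
  shows "(\<integral>x. f x \<partial>measure_pmf M) = (\<Sum>x\<in>set_pmf M. pmf M x * f x)"
  using assms by (subst integral_measure_pmf_real[of "set_pmf M"]) (auto simp: mult.commute)

lemma measure_pmf_eq_sum:
  assumes "finite A" "set_pmf M \<subseteq> A"
  shows "measure_pmf.prob M E = (\<Sum>x\<in>A \<inter> E. pmf M x)"
proof -
  have "measure_pmf.prob M E = measure_pmf.prob M (A \<inter> E)"
    using assms by (intro measure_pmf.finite_measure_eq_AE) (auto simp: AE_measure_pmf_iff)
  also have "\<dots> = (\<Sum>x\<in>A \<inter> E. pmf M x)"
    using assms by (intro measure_measure_pmf_finite) auto
  finally show ?thesis .
qed

lemma measure_bind_pmf_real:
  "measure_pmf.prob (bind_pmf M N) X = (\<integral>x. measure_pmf.prob (N x) X \<partial>measure_pmf M)"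
proof -
  have int: "integrable (measure_pmf M) (\<lambda>x. measure_pmf.prob (N x) X)"
    by (rule measure_pmf.integrable_const_bound[where B=1]) auto
  have "emeasure (measure_pmf (bind_pmf M N)) X = (\<integral>\<^sup>+x. ennreal (measure_pmf.prob (N x) X) \<partial>measure_pmf M)"
    unfolding emeasure_bind_pmf by (simp add: measure_pmf.emeasure_eq_measure)
  also have "\<dots> = ennreal (\<integral>x. measure_pmf.prob (N x) X \<partial>measure_pmf M)"
    by (rule nn_integral_eq_integral[OF int]) auto
  finally show ?thesis
    by (simp add: measure_pmf.emeasure_eq_measure integral_nonneg_AE)
qed

lemma pmf_le_pmf_map: "pmf M x \<le> pmf (map_pmf g M) (g x)"
proof -
  have "pmf M x = measure_pmf.prob M {x}" by (simp add: measure_pmf_single)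
  also have "\<dots> \<le> measure_pmf.prob M (g -` {g x})"
    by (intro measure_pmf.finite_measure_mono) auto
  finally show ?thesis by (simp add: pmf_map)
qed

lemma pmf_map_inj_on_superset:
  assumes inj: "inj_on g A" and sub: "set_pmf M \<subseteq> A" and y: "y \<in> A"
  shows "pmf (map_pmf g M) (g y) = pmf M y"
proof -
  have "pmf (map_pmf g M) (g y) = measure_pmf.prob M (g -` {g y})" by (simp add: pmf_map)
  also have "\<dots> = measure_pmf.prob M {y}"
    using inj sub y
    by (intro measure_pmf.finite_measure_eq_AE) (auto simp: AE_measure_pmf_iff inj_on_def)
  finally show ?thesis by (simp add: measure_pmf_single)
qed

lemma gibbs_inequality:
  fixes c :: "'b \<Rightarrow> real"
  assumes fin: "finite (set_pmf M)" and pos: "\<And>x. x \<in> set_pmf M \<Longrightarrow> c x > 0"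
    and sum: "(\<Sum>x\<in>set_pmf M. c x) \<le> 1"
  shows "(\<integral>x. ln (c x / pmf M x) \<partial>measure_pmf M) \<le> 0"
proof -
  have "(\<integral>x. ln (c x / pmf M x) \<partial>measure_pmf M) = (\<Sum>x\<in>set_pmf M. pmf M x * ln (c x / pmf M x))"
    by (rule integral_pmf_finite[OF fin])
  also have "\<dots> \<le> (\<Sum>x\<in>set_pmf M. pmf M x * (c x / pmf M x - 1))"
  proof (intro sum_mono mult_left_mono)
    fix x assume x: "x \<in> set_pmf M"
    then have "pmf M x > 0" by (simp add: pmf_positive)
    then show "ln (c x / pmf M x) \<le> c x / pmf M x - 1" using pos[OF x]
      by (intro ln_le_minus_one) simp
  qed simp
  also have "\<dots> = (\<Sum>x\<in>set_pmf M. c x - pmf M x)"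
    by (intro sum.cong) (auto simp: field_simps set_pmf_iff)
  also have "\<dots> = (\<Sum>x\<in>set_pmf M. c x) - 1"
    using sum_pmf_eq_1[OF fin, of M] by (simp add: sum_subtractf)
  finally show ?thesis using sum by simp
qed

lemma entropy_pmf_eq_integral:
  "finite (set_pmf \<mu>) \<Longrightarrow> entropy_pmf \<mu> = - (\<integral>x. ln (pmf \<mu> x) \<partial>measure_pmf \<mu>)"
  by (simp add: entropy_pmf_def integral_pmf_finite sum_negf)

definition KL_pmf :: "'b pmf \<Rightarrow> 'b pmf \<Rightarrow> real" where
  "KL_pmf P Q = (\<integral>x. ln (pmf P x / pmf Q x) \<partial>measure_pmf P)"

lemma KL_pmf_nonneg:
  assumes fin: "finite (set_pmf P)" and pos: "\<And>x. x \<in> set_pmf P \<Longrightarrow> pmf Q x > 0"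
  shows "KL_pmf P Q \<ge> 0"
proof -
  have "(\<integral>x. ln (pmf Q x / pmf P x) \<partial>measure_pmf P) \<le> 0"
  proof (rule gibbs_inequality[OF fin pos])
    show "(\<Sum>x\<in>set_pmf P. pmf Q x) \<le> 1"
      using fin measure_pmf.prob_le_1[of Q "set_pmf P"] by (simp add: measure_measure_pmf_finite)
  qed
  moreover have "(\<integral>x. ln (pmf Q x / pmf P x) \<partial>measure_pmf P) = (\<integral>x. - ln (pmf P x / pmf Q x) \<partial>measure_pmf P)"
    using pos by (intro integral_cong_AE) (auto simp: AE_measure_pmf_iff ln_div pmf_positive)
  ultimately show ?thesis by (simp add: KL_pmf_def)
qed

lemma measure_pmf_diff_le_overlap:
  assumes finA: "finite A" and sub: "set_pmf P \<subseteq> A" "set_pmf Q \<subseteq> A"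
  shows "measure_pmf.prob P E - measure_pmf.prob Q E \<le> 1 - (\<Sum>x\<in>A. min (pmf P x) (pmf Q x))"
proof -
  have "measure_pmf.prob P E - measure_pmf.prob Q E = (\<Sum>x\<in>A \<inter> E. pmf P x - pmf Q x)"
    using measure_pmf_eq_sum[OF finA, of P E] measure_pmf_eq_sum[OF finA, of Q E] sub
    by (simp add: sum_subtractf)
  also have "\<dots> \<le> (\<Sum>x\<in>A \<inter> E. pmf P x - min (pmf P x) (pmf Q x))"
    by (intro sum_mono) auto
  also have "\<dots> \<le> (\<Sum>x\<in>A. pmf P x - min (pmf P x) (pmf Q x))"
    by (intro sum_mono2 finA) auto
  also have "\<dots> = 1 - (\<Sum>x\<in>A. min (pmf P x) (pmf Q x))"
    using sum_pmf_eq_1[OF finA sub(1)] by (simp add: sum_subtractf)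
  finally show ?thesis .
qed

lemma bhattacharyya_sq_le_overlap:
  assumes finA: "finite A" and sub: "set_pmf P \<subseteq> A" "set_pmf Q \<subseteq> A"
  defines "m \<equiv> \<Sum>x\<in>A. min (pmf P x) (pmf Q x)"
  shows "(\<Sum>x\<in>A. sqrt (pmf P x * pmf Q x))\<^sup>2 \<le> m * (2 - m)"
proof -
  have "(\<Sum>x\<in>A. sqrt (pmf P x * pmf Q x))
      = (\<Sum>x\<in>A. sqrt (min (pmf P x) (pmf Q x)) * sqrt (max (pmf P x) (pmf Q x)))"
    by (intro sum.cong) (auto simp: real_sqrt_mult[symmetric] min_def max_def mult.commute)
  then have "(\<Sum>x\<in>A. sqrt (pmf P x * pmf Q x))\<^sup>2
      \<le> (\<Sum>x\<in>A. (sqrt (min (pmf P x) (pmf Q x)))\<^sup>2) * (\<Sum>x\<in>A. (sqrt (max (pmf P x) (pmf Q x)))\<^sup>2)"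
    using Cauchy_Schwarz_ineq_sum by metis
  also have "\<dots> = m * (\<Sum>x\<in>A. pmf P x + pmf Q x - min (pmf P x) (pmf Q x))"
    unfolding m_def by (intro arg_cong2[where f="(*)"] sum.cong refl) (auto simp: max_def min_def)
  also have "\<dots> = m * (2 - m)"
    using sum_pmf_eq_1[OF finA sub(1)] sum_pmf_eq_1[OF finA sub(2)]
    by (simp add: m_def sum_subtractf sum.distrib)
  finally show ?thesis .
qed

text \<open>Jensen's inequality for \<open>exp\<close> applied to \<open>E\<^sub>P[ln (q/p)/2]\<close>.\<close>

lemma exp_neg_half_KL_pmf_le_bhattacharyya:
  assumes finA: "finite A" and sub: "set_pmf P \<subseteq> A"
    and pos: "\<And>x. x \<in> set_pmf P \<Longrightarrow> pmf Q x > 0"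
  shows "exp (- KL_pmf P Q / 2) \<le> (\<Sum>x\<in>A. sqrt (pmf P x * pmf Q x))"
proof -
  define S where "S = set_pmf P"
  have finS: "finite S" using finA sub finite_subset by (auto simp: S_def)
  have pS: "\<And>x. x \<in> S \<Longrightarrow> pmf P x > 0" by (simp add: S_def pmf_positive)
  have qS: "\<And>x. x \<in> S \<Longrightarrow> pmf Q x > 0" by (simp add: S_def pos)
  have sp1: "(\<Sum>x\<in>S. pmf P x) = 1" unfolding S_def by (rule sum_pmf_eq_1) (use finS S_def in auto)
  have "exp (\<Sum>x\<in>S. pmf P x *\<^sub>R (ln (pmf Q x / pmf P x) / 2))
      \<le> (\<Sum>x\<in>S. pmf P x * exp (ln (pmf Q x / pmf P x) / 2))"
    by (rule convex_on_sum[OF finS _ exp_convex sp1]) (auto simp: S_def less_imp_le pS set_pmf_not_empty)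
  also have "(\<Sum>x\<in>S. pmf P x *\<^sub>R (ln (pmf Q x / pmf P x) / 2)) = - KL_pmf P Q / 2"
  proof -
    have "(\<Sum>x\<in>S. pmf P x *\<^sub>R (ln (pmf Q x / pmf P x) / 2)) = - (\<Sum>x\<in>S. pmf P x * ln (pmf P x / pmf Q x)) / 2"
      unfolding sum_negf[symmetric] sum_divide_distrib
      by (intro sum.cong refl) (use pS qS in \<open>simp add: ln_div algebra_simps\<close>)
    then show ?thesis using finS by (simp add: KL_pmf_def S_def integral_pmf_finite)
  qed
  also have "(\<Sum>x\<in>S. pmf P x * exp (ln (pmf Q x / pmf P x) / 2)) = (\<Sum>x\<in>S. sqrt (pmf P x * pmf Q x))"
  proof (intro sum.cong refl)
    fix x assume x: "x \<in> S"
    have pq: "pmf Q x / pmf P x > 0" using pS[OF x] qS[OF x] by simp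
    have "exp (ln (pmf Q x / pmf P x) / 2) = sqrt (pmf Q x / pmf P x)"
      using pq by (simp add: ln_sqrt[symmetric])
    moreover have "pmf P x * sqrt (pmf Q x / pmf P x) = sqrt (pmf P x * pmf Q x)"
      using pS[OF x] by (simp add: real_sqrt_divide real_sqrt_mult field_simps)
    ultimately show "pmf P x * exp (ln (pmf Q x / pmf P x) / 2) = sqrt (pmf P x * pmf Q x)" by simp
  qed
  also have "\<dots> \<le> (\<Sum>x\<in>A. sqrt (pmf P x * pmf Q x))"
    using sub by (intro sum_mono2 finA) (auto simp: S_def)
  finally show ?thesis .
qed

lemma measure_pmf_diff_le_KL_pmf:
  assumes finP: "finite (set_pmf P)" and finQ: "finite (set_pmf Q)"
    and pos: "\<And>x. x \<in> set_pmf P \<Longrightarrow> pmf Q x > 0"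
  shows "measure_pmf.prob P E - measure_pmf.prob Q E \<le> sqrt (1 - exp (- KL_pmf P Q))"
proof -
  define A where "A = set_pmf P \<union> set_pmf Q"
  define m where "m = (\<Sum>x\<in>A. min (pmf P x) (pmf Q x))"
  define BC where "BC = (\<Sum>x\<in>A. sqrt (pmf P x * pmf Q x))"
  have finA: "finite A" using finP finQ by (simp add: A_def)
  have sub: "set_pmf P \<subseteq> A" "set_pmf Q \<subseteq> A" by (auto simp: A_def)
  have "exp (- KL_pmf P Q) = (exp (- KL_pmf P Q / 2))\<^sup>2" by (simp add: power2_eq_square exp_add[symmetric])
  also have "\<dots> \<le> BC\<^sup>2"
    unfolding BC_def using exp_neg_half_KL_pmf_le_bhattacharyya[OF finA sub(1) pos]
    by (intro power_mono) auto
  also have "\<dots> \<le> m * (2 - m)" unfolding BC_def m_def by (rule bhattacharyya_sq_le_overlap[OF finA sub])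
  finally have "(1 - m)\<^sup>2 \<le> 1 - exp (- KL_pmf P Q)" by (simp add: power2_eq_square algebra_simps)
  then have "\<bar>1 - m\<bar> \<le> sqrt (1 - exp (- KL_pmf P Q))"
    using real_sqrt_le_mono by fastforce
  then show ?thesis using measure_pmf_diff_le_overlap[OF finA sub, of E] unfolding m_def by linarith
qed

lemma Pi_pmf_map_components:
  fixes S :: "'i::finite \<Rightarrow> 'b pmf"
  shows "map_pmf (\<lambda>g i. f i (g i)) (Pi_pmf UNIV d S) = Pi_pmf UNIV d' (\<lambda>i. map_pmf (f i) (S i))"
proof -
  have "Pi_pmf UNIV d' (\<lambda>i. map_pmf (f i) (S i)) = Pi_pmf UNIV d' (\<lambda>i. bind_pmf (S i) (\<lambda>x. return_pmf (f i x)))"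
    by (simp add: map_pmf_def)
  also have "\<dots> = bind_pmf (Pi_pmf UNIV d S) (\<lambda>g. Pi_pmf UNIV d' (\<lambda>i. return_pmf (f i (g i))))"
    by (rule Pi_pmf_bind) simp
  also have "\<dots> = map_pmf (\<lambda>g i. f i (g i)) (Pi_pmf UNIV d S)"
    by (simp add: map_pmf_def)
  finally show ?thesis by simp
qed

lemma Pi_pmf_resample_component:
  fixes p :: "'i::finite \<Rightarrow> 's pmf"
  shows "bind_pmf (p i) (\<lambda>x. map_pmf (\<lambda>g. g(i := x)) (Pi_pmf UNIV d p)) = Pi_pmf UNIV d p"
proof -
  define R where "R = Pi_pmf (UNIV - {i}) d p"
  have U: "UNIV = insert i (UNIV - {i})" by auto
  have S: "Pi_pmf UNIV d p = map_pmf (\<lambda>(y,f). f(i:=y)) (pair_pmf (p i) R)"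
    unfolding R_def by (subst U, subst Pi_pmf_insert) auto
  have "bind_pmf (p i) (\<lambda>x. map_pmf (\<lambda>g. g(i := x)) (Pi_pmf UNIV d p))
      = bind_pmf (p i) (\<lambda>x. map_pmf (\<lambda>f. f(i := x)) R)"
  proof (intro bind_pmf_cong refl)
    fix x
    have "map_pmf (\<lambda>f. f(i := x)) R = map_pmf (\<lambda>f. f(i := x)) (map_pmf snd (pair_pmf (p i) R))"
      by (simp add: map_snd_pair_pmf)
    then show "map_pmf (\<lambda>g. g(i := x)) (Pi_pmf UNIV d p) = map_pmf (\<lambda>f. f(i := x)) R"
      unfolding S by (simp add: pmf.map_comp o_def case_prod_unfold)
  qed
  also have "\<dots> = Pi_pmf UNIV d p"
    unfolding S by (simp add: pair_pmf_def map_pmf_def bind_assoc_pmf bind_return_pmf case_prod_unfold)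
  finally show ?thesis .
qed

text \<open>
  At the loss time the real next joint state \<open>s'\<close> and independent imagined copies
  \<open>imag i\<close> are drawn from the same kernel; overwriting the own component of each copy by
  the real one leaves the copies independent with the original law.
\<close>

lemma Pi_pmf_update_diagonal:
  fixes p :: "'i::finite \<Rightarrow> 's pmf"
  shows "bind_pmf (Pi_pmf UNIV d p) (\<lambda>s'. map_pmf (\<lambda>imag i. (imag i)(i := s' i)) (Pi_pmf UNIV d2 (\<lambda>i. Pi_pmf UNIV d p)))
       = Pi_pmf UNIV d2 (\<lambda>i. Pi_pmf UNIV d p)"
proof -
  have "bind_pmf (Pi_pmf UNIV d p) (\<lambda>s'. map_pmf (\<lambda>imag i. (imag i)(i := s' i)) (Pi_pmf UNIV d2 (\<lambda>i. Pi_pmf UNIV d p)))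
      = bind_pmf (Pi_pmf UNIV d p) (\<lambda>s'. Pi_pmf UNIV d2 (\<lambda>i. map_pmf (\<lambda>g. g(i := s' i)) (Pi_pmf UNIV d p)))"
    by (intro bind_pmf_cong refl Pi_pmf_map_components)
  also have "\<dots> = Pi_pmf UNIV d2 (\<lambda>i. bind_pmf (p i) (\<lambda>x. map_pmf (\<lambda>g. g(i := x)) (Pi_pmf UNIV d p)))"
    by (rule Pi_pmf_bind[symmetric]) simp
  also have "\<dots> = Pi_pmf UNIV d2 (\<lambda>i. Pi_pmf UNIV d p)"
    by (simp add: Pi_pmf_resample_component)
  finally show ?thesis .
qed

abbreviation agent_proj :: "'i \<Rightarrow> ('i \<Rightarrow> 's) \<times> ('i \<Rightarrow> 'a) \<Rightarrow> 's \<times> 'a" where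
  "agent_proj i \<equiv> (\<lambda>(s, a). (s i, a i))"

abbreviation agent_marginal :: "'i \<Rightarrow> ('i,'s,'a) prefix pmf \<Rightarrow> ('s \<times> 'a) list pmf" where
  "agent_marginal i \<mu> \<equiv> map_pmf (map (agent_proj i)) \<mu>"

definition merge_agents :: "nat \<Rightarrow> ('i \<Rightarrow> ('s \<times> 'a) list) \<Rightarrow> ('i,'s,'a) prefix" where
  "merge_agents m trs = map (\<lambda>t. (\<lambda>i. fst (trs i ! t), \<lambda>i. snd (trs i ! t))) [0..<m]"

definition prod_marginals :: "nat \<Rightarrow> ('i::finite,'s,'a) prefix pmf \<Rightarrow> ('i,'s,'a) prefix pmf" where
  "prod_marginals m \<mu> = map_pmf (merge_agents m) (Pi_pmf UNIV undefined (\<lambda>i. agent_marginal i \<mu>))"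

definition total_corr_pmf :: "('i::finite,'s,'a) prefix pmf \<Rightarrow> real" where
  "total_corr_pmf \<mu> = (\<Sum>i\<in>UNIV. entropy_pmf (agent_marginal i \<mu>)) - entropy_pmf \<mu>"

lemma tc_prefix_eq_total_corr_pmf: "tc_prefix T pol sI n = total_corr_pmf (full_prefix T pol n sI)"
  by (simp add: tc_prefix_def total_corr_pmf_def)

lemma length_merge_agents [simp]: "length (merge_agents m trs) = m"
  by (simp add: merge_agents_def)

lemma merge_agents_split: "length xs = m \<Longrightarrow> merge_agents m (\<lambda>i. map (agent_proj i) xs) = xs"
  by (auto simp: merge_agents_def intro!: nth_equalityI simp: case_prod_unfold)

lemma inj_on_merge_agents: "inj_on (merge_agents m) {trs. \<forall>i. length (trs i) = m}"
proof (rule inj_onI)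
  fix trs trs' assume len: "trs \<in> {trs. \<forall>i. length (trs i) = m}" "trs' \<in> {trs. \<forall>i. length (trs i) = m}"
    and eq: "merge_agents m trs = merge_agents m trs'"
  show "trs = trs'"
  proof
    fix i
    show "trs i = trs' i"
    proof (rule nth_equalityI)
      show "length (trs i) = length (trs' i)" using len by simp
      fix t assume t: "t < length (trs i)"
      have "merge_agents m trs ! t = merge_agents m trs' ! t" using eq by simp
      then show "trs i ! t = trs' i ! t"
        using t len by (simp add: merge_agents_def fun_eq_iff prod_eq_iff)
    qed
  qed
qed

lemma inj_split_agents: "inj (\<lambda>(xs :: ('i,'s,'a) prefix) i. map (agent_proj i) xs)"
proof (rule injI)
  fix xs ys :: "('i,'s,'a) prefix"
  assume eq: "(\<lambda>i. map (agent_proj i) xs) = (\<lambda>i. map (agent_proj i) ys)"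
  have len: "length xs = length ys"
    using arg_cong[OF fun_cong[OF eq, of undefined], of length] by simp
  have "xs = merge_agents (length xs) (\<lambda>i. map (agent_proj i) xs)" by (simp add: merge_agents_split)
  also have "\<dots> = merge_agents (length ys) (\<lambda>i. map (agent_proj i) ys)" by (simp only: len eq)
  also have "\<dots> = ys" by (simp add: merge_agents_split)
  finally show "xs = ys" .
qed

lemma pmf_prod_marginals:
  fixes \<mu> :: "('i::finite,'s,'a) prefix pmf"
  assumes len\<mu>: "\<And>f. f \<in> set_pmf \<mu> \<Longrightarrow> length f = m" and lenf: "length f = m"
  shows "pmf (prod_marginals m \<mu>) f = (\<Prod>i\<in>UNIV. pmf (agent_marginal i \<mu>) (map (agent_proj i) f))"
proof -
  let ?A = "{trs :: 'i \<Rightarrow> ('s \<times> 'a) list. \<forall>i. length (trs i) = m}"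
  have sub: "set_pmf (Pi_pmf UNIV undefined (\<lambda>i. agent_marginal i \<mu>)) \<subseteq> ?A"
    using len\<mu> by (auto simp: set_Pi_pmf PiE_dflt_def) (metis imageE length_map)
  have "pmf (prod_marginals m \<mu>) f
      = pmf (map_pmf (merge_agents m) (Pi_pmf UNIV undefined (\<lambda>i. agent_marginal i \<mu>)))
            (merge_agents m (\<lambda>i. map (agent_proj i) f))"
    by (simp add: prod_marginals_def merge_agents_split lenf)
  also have "\<dots> = pmf (Pi_pmf UNIV undefined (\<lambda>i. agent_marginal i \<mu>)) (\<lambda>i. map (agent_proj i) f)"
    by (rule pmf_map_inj_on_superset[OF inj_on_merge_agents sub]) (simp add: lenf)
  also have "\<dots> = (\<Prod>i\<in>UNIV. pmf (agent_marginal i \<mu>) (map (agent_proj i) f))"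
    by (subst pmf_Pi) auto
  finally show ?thesis .
qed

lemma finite_prod_marginals:
  "finite (set_pmf \<mu>) \<Longrightarrow> finite (set_pmf (prod_marginals m \<mu>))"
  by (simp add: prod_marginals_def set_Pi_pmf finite_PiE_dflt)

lemma map_pmf_Nil_append [simp]: "map_pmf ((@) []) \<mu> = \<mu>"
proof -
  have "map_pmf ((@) []) \<mu> = map_pmf id \<mu>"
    by (rule arg_cong[where f="\<lambda>f. map_pmf f \<mu>"]) auto
  then show ?thesis by (simp add: pmf.map_id)
qed

lemma pmf_bind_append:
  assumes lenW: "\<And>h. h \<in> set_pmf W \<Longrightarrow> length h = k" and finW: "finite (set_pmf W)"
    and lenh: "length h = k"
  shows "pmf (bind_pmf W (\<lambda>h'. map_pmf (\<lambda>r. h' @ r) (Z h'))) (h @ f) = pmf W h * pmf (Z h) f"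
proof -
  have eq: "pmf (map_pmf (\<lambda>r. h' @ r) (Z h')) (h @ f) = (if h' = h then pmf (Z h) f else 0)"
    if "h' \<in> set_pmf W" for h'
  proof (cases "h' = h")
    case True
    then show ?thesis using pmf_map_inj'[of "\<lambda>r. h @ r" "Z h" f] by (simp add: inj_def)
  next
    case False
    then have "h @ f \<notin> (\<lambda>r. h' @ r) ` set_pmf (Z h')"
      using lenW[OF that] lenh by (auto simp: append_eq_append_conv)
    then show ?thesis using False by (simp add: pmf_map_outside)
  qed
  have "pmf (bind_pmf W (\<lambda>h'. map_pmf (\<lambda>r. h' @ r) (Z h'))) (h @ f)
      = (\<integral>h'. (if h' = h then pmf (Z h) f else 0) \<partial>measure_pmf W)"
    unfolding pmf_bind by (intro integral_cong_AE) (simp_all add: AE_measure_pmf_iff eq)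
  also have "\<dots> = (\<Sum>h'\<in>set_pmf W. if h' = h then pmf W h * pmf (Z h) f else 0)"
    by (subst integral_pmf_finite[OF finW]) (auto intro: sum.cong)
  also have "\<dots> = pmf W h * pmf (Z h) f"
    using finW by (simp add: set_pmf_iff)
  finally show ?thesis .
qed

lemma map_take_bind_append:
  assumes lenW: "\<And>h. h \<in> set_pmf W \<Longrightarrow> length h = k"
  shows "map_pmf (take k) (bind_pmf W (\<lambda>h. map_pmf (\<lambda>r. h @ r) (Z h))) = W"
proof -
  have "map_pmf (take k) (bind_pmf W (\<lambda>h. map_pmf (\<lambda>r. h @ r) (Z h)))
      = bind_pmf W (\<lambda>h. map_pmf (\<lambda>r. take k (h @ r)) (Z h))"
    by (simp add: map_bind_pmf pmf.map_comp o_def)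
  also have "\<dots> = bind_pmf W return_pmf"
    using lenW by (intro bind_pmf_cong refl) simp
  finally show ?thesis by (simp add: bind_return_pmf')
qed

lemma length_full_prefix: "xs \<in> set_pmf (full_prefix T pol n s) \<Longrightarrow> length xs = n"
  by (induction n arbitrary: xs s) auto

lemma full_prefix_first: "xs \<in> set_pmf (full_prefix T pol (Suc n) s) \<Longrightarrow> fst (xs ! 0) = s"
  by auto

lemma agent_run_eq_marginal: "agent_run T pol i n sh = agent_marginal i (full_prefix T pol n sh)"
  by (induction n arbitrary: sh) (simp_all add: map_bind_pmf bind_map_pmf)

lemma indep_phase_eq_merge:
  "indep_phase T pol n B = map_pmf (merge_agents n) (Pi_pmf UNIV undefined (\<lambda>i. agent_run T pol i n (B i)))"
  by (simp add: indep_phase_def merge_agents_def[abs_def])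

lemma indep_phase_0: "indep_phase T pol 0 B = return_pmf []"
  by (simp add: indep_phase_def)

lemma indep_phase_initial_eq_prod_marginals:
  "indep_phase T pol n (\<lambda>i. sI) = prod_marginals n (full_prefix T pol n sI)"
  by (simp add: indep_phase_eq_merge prod_marginals_def agent_run_eq_marginal)

definition full_continuation ::
  "('i::finite \<Rightarrow> 's \<Rightarrow> 'a \<Rightarrow> 's pmf) \<Rightarrow> (('i \<Rightarrow> 's) \<Rightarrow> ('i \<Rightarrow> 'a) pmf) \<Rightarrow> nat
   \<Rightarrow> ('i \<Rightarrow> 's) \<times> ('i \<Rightarrow> 'a) \<Rightarrow> ('i,'s,'a) prefix pmf" where
  "full_continuation T pol m sa = bind_pmf (joint_step T (fst sa) (snd sa)) (\<lambda>s'. full_prefix T pol m s')"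

definition loss_continuation ::
  "('i::finite \<Rightarrow> 's \<Rightarrow> 'a \<Rightarrow> 's pmf) \<Rightarrow> (('i \<Rightarrow> 's) \<Rightarrow> ('i \<Rightarrow> 'a) pmf) \<Rightarrow> nat
   \<Rightarrow> ('i \<Rightarrow> 's) \<times> ('i \<Rightarrow> 'a) \<Rightarrow> ('i,'s,'a) prefix pmf" where
  "loss_continuation T pol m sa = bind_pmf (joint_step T (fst sa) (snd sa)) (\<lambda>s'.
     bind_pmf (Pi_pmf UNIV undefined (\<lambda>i. joint_step T (fst sa) (snd sa)))
       (\<lambda>imag. indep_phase T pol m (\<lambda>i. (imag i)(i := s' i))))"

lemma bind_full_prefix_Suc_append:
  "bind_pmf (full_prefix T pol (Suc (Suc k)) s) (\<lambda>h. map_pmf (\<lambda>r. h @ r) (K (last h))) =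
   bind_pmf (pol s) (\<lambda>a. bind_pmf (joint_step T s a) (\<lambda>s'.
     bind_pmf (bind_pmf (full_prefix T pol (Suc k) s') (\<lambda>h. map_pmf (\<lambda>r. h @ r) (K (last h))))
       (\<lambda>rest. return_pmf ((s, a) # rest))))"
proof -
  have "bind_pmf (pol s) (\<lambda>a. bind_pmf (joint_step T s a) (\<lambda>s'.
          bind_pmf (bind_pmf (full_prefix T pol (Suc k) s') (\<lambda>h. map_pmf (\<lambda>r. h @ r) (K (last h))))
            (\<lambda>rest. return_pmf ((s, a) # rest))))
      = bind_pmf (pol s) (\<lambda>a. bind_pmf (joint_step T s a) (\<lambda>s'.
          bind_pmf (full_prefix T pol (Suc k) s') (\<lambda>h. map_pmf (\<lambda>r. ((s, a) # h) @ r) (K (last ((s, a) # h))))))"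
    unfolding bind_assoc_pmf
  proof (intro bind_pmf_cong refl)
    fix a s' h assume "h \<in> set_pmf (full_prefix T pol (Suc k) s')"
    then have "h \<noteq> []" by (auto dest!: length_full_prefix)
    then show "map_pmf (\<lambda>r. h @ r) (K (last h)) \<bind> (\<lambda>rest. return_pmf ((s, a) # rest)) =
        map_pmf (\<lambda>r. ((s, a) # h) @ r) (K (last ((s, a) # h)))"
      by (simp add: bind_map_pmf map_pmf_def bind_assoc_pmf bind_return_pmf)
  qed
  also have "\<dots> = bind_pmf (full_prefix T pol (Suc (Suc k)) s) (\<lambda>h. map_pmf (\<lambda>r. h @ r) (K (last h)))"
    by (simp only: full_prefix.simps(2)[of T pol "Suc k" s] bind_assoc_pmf bind_return_pmf)
  finally show ?thesis ..
qed

lemma full_prefix_split: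
  "full_prefix T pol (Suc k + m) s =
   bind_pmf (full_prefix T pol (Suc k) s) (\<lambda>h. map_pmf (\<lambda>r. h @ r) (full_continuation T pol m (last h)))"
proof (induction k arbitrary: s)
  case 0
  then show ?case
    by (simp add: full_continuation_def map_bind_pmf bind_return_pmf bind_assoc_pmf map_pmf_def)
next
  case (Suc k)
  then show ?case unfolding bind_full_prefix_Suc_append by simp
qed

lemma loss_prefix_split:
  "loss_prefix T pol k (Suc k + m) s =
   bind_pmf (full_prefix T pol (Suc k) s) (\<lambda>h. map_pmf (\<lambda>r. h @ r) (loss_continuation T pol m (last h)))"
proof (induction k arbitrary: s)
  case 0
  then show ?case
    by (simp add: loss_continuation_def map_bind_pmf bind_return_pmf bind_assoc_pmf map_pmf_def)
next
  case (Suc k)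
  then show ?case unfolding bind_full_prefix_Suc_append by simp
qed

lemma loss_prefix_before_loss: "n \<le> Suc k \<Longrightarrow> loss_prefix T pol k n s = full_prefix T pol n s"
proof (induction n arbitrary: k s)
  case (Suc n)
  then show ?case by (cases k) (simp_all add: indep_phase_0)
qed simp

lemma loss_continuation_eq_prod_marginals:
  "loss_continuation T pol m sa = prod_marginals m (full_continuation T pol m sa)"
proof -
  define S where "S = joint_step T (fst sa) (snd sa)"
  define K where "K = (\<lambda>B. map_pmf (merge_agents m) (Pi_pmf UNIV undefined (\<lambda>i. agent_run T pol i m (B i))))"
  have S': "S = Pi_pmf UNIV undefined (\<lambda>i. T i (fst sa i) (snd sa i))" by (simp add: S_def joint_step_def)
  have "loss_continuation T pol m sa
      = bind_pmf S (\<lambda>s'. bind_pmf (Pi_pmf UNIV undefined (\<lambda>i. S)) (\<lambda>imag. K (\<lambda>i. (imag i)(i := s' i))))"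
    by (simp add: loss_continuation_def S_def K_def indep_phase_eq_merge)
  also have "\<dots> = bind_pmf (bind_pmf S (\<lambda>s'. map_pmf (\<lambda>imag i. (imag i)(i := s' i)) (Pi_pmf UNIV undefined (\<lambda>i. S)))) K"
    by (simp add: bind_assoc_pmf bind_map_pmf)
  also have "\<dots> = bind_pmf (Pi_pmf UNIV undefined (\<lambda>i. S)) K"
    unfolding S' by (subst Pi_pmf_update_diagonal) (rule refl)
  also have "\<dots> = map_pmf (merge_agents m)
      (bind_pmf (Pi_pmf UNIV undefined (\<lambda>i. S)) (\<lambda>imag. Pi_pmf UNIV undefined (\<lambda>i. agent_run T pol i m (imag i))))"
    by (simp add: K_def map_bind_pmf)
  also have "\<dots> = map_pmf (merge_agents m) (Pi_pmf UNIV undefined (\<lambda>i. bind_pmf S (\<lambda>s'. agent_run T pol i m s')))"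
    by (subst Pi_pmf_bind[symmetric]) simp_all
  also have "\<dots> = prod_marginals m (full_continuation T pol m sa)"
    by (simp add: prod_marginals_def full_continuation_def S_def agent_run_eq_marginal map_bind_pmf)
  finally show ?thesis .
qed

section \<open>Decoupling after a common history costs at most the total correlation\<close>

lemma pmf_agent_marginal_pos:
  "xs \<in> set_pmf \<mu> \<Longrightarrow> pmf (agent_marginal i \<mu>) (map (agent_proj i) xs) > 0"
  using pmf_le_pmf_map[of \<mu> xs "map (agent_proj i)"] by (simp add: pmf_positive)

locale prefix_extension =
  fixes W :: "('i::finite,'s,'a) prefix pmf" and P :: "('i,'s,'a) prefix \<Rightarrow> ('i,'s,'a) prefix pmf"
    and k m :: nat
  assumes finite_W: "finite (set_pmf W)"
    and length_W: "\<And>h. h \<in> set_pmf W \<Longrightarrow> length h = k"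
    and finite_P: "\<And>h. h \<in> set_pmf W \<Longrightarrow> finite (set_pmf (P h))"
    and length_P: "\<And>h f. h \<in> set_pmf W \<Longrightarrow> f \<in> set_pmf (P h) \<Longrightarrow> length f = m"
begin

definition joint_law :: "('i,'s,'a) prefix pmf" where
  "joint_law = bind_pmf W (\<lambda>h. map_pmf (\<lambda>r. h @ r) (P h))"

definition decoupled_law :: "('i,'s,'a) prefix pmf" where
  "decoupled_law = bind_pmf W (\<lambda>h. map_pmf (\<lambda>r. h @ r) (prod_marginals m (P h)))"

lemma set_joint_law: "set_pmf joint_law = (\<Union>h\<in>set_pmf W. (\<lambda>r. h @ r) ` set_pmf (P h))"
  by (simp add: joint_law_def)

lemma append_in_set_joint_law: "h \<in> set_pmf W \<Longrightarrow> f \<in> set_pmf (P h) \<Longrightarrow> h @ f \<in> set_pmf joint_law"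
  by (auto simp: set_joint_law)

lemma map_take_joint_law: "map_pmf (take k) joint_law = W"
  unfolding joint_law_def by (rule map_take_bind_append[OF length_W])

lemma finite_joint_law: "finite (set_pmf joint_law)"
  using finite_W finite_P by (auto simp: set_joint_law)

lemma finite_decoupled_law: "finite (set_pmf decoupled_law)"
  using finite_W finite_P by (auto simp: decoupled_law_def finite_prod_marginals)

lemma pmf_decoupled_law_append:
  assumes h: "h \<in> set_pmf W" and f: "f \<in> set_pmf (P h)"
  shows "pmf decoupled_law (h @ f) = pmf W h * (\<Prod>i\<in>UNIV. pmf (agent_marginal i (P h)) (map (agent_proj i) f))"
  unfolding decoupled_law_def using pmf_prod_marginals[OF length_P[OF h] length_P[OF h f]]
  by (simp add: pmf_bind_append[OF length_W finite_W length_W[OF h]])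

lemma pmf_decoupled_law_pos: "x \<in> set_pmf joint_law \<Longrightarrow> pmf decoupled_law x > 0"
  by (auto simp: set_joint_law pmf_decoupled_law_append pmf_positive pmf_agent_marginal_pos prod_pos)

lemma sum_pmf_marginal_extensions_le:
  assumes "finite V" "length u = k"
  shows "(\<Sum>v\<in>V. pmf (agent_marginal i joint_law) (u @ v)) \<le> pmf (agent_marginal i W) u"
proof -
  have "(\<Sum>v\<in>V. pmf (agent_marginal i joint_law) (u @ v)) = (\<Sum>y\<in>(\<lambda>v. u @ v) ` V. pmf (agent_marginal i joint_law) y)"
    by (subst sum.reindex) (auto simp: inj_on_def)
  also have "\<dots> = measure_pmf.prob (agent_marginal i joint_law) ((\<lambda>v. u @ v) ` V)"
    using assms by (simp add: measure_measure_pmf_finite del: measure_map_pmf)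
  also have "\<dots> \<le> measure_pmf.prob (agent_marginal i joint_law) {y. take k y = u}"
    using assms by (intro measure_pmf.finite_measure_mono) auto
  also have "\<dots> = measure_pmf.prob (map_pmf (take k) joint_law) {h. map (agent_proj i) h = u}"
    by (simp add: vimage_def take_map)
  also have "\<dots> = measure_pmf.prob W {h. map (agent_proj i) h = u}"
    by (simp only: map_take_joint_law)
  also have "\<dots> = pmf (agent_marginal i W) u"
    by (simp add: pmf_map vimage_def)
  finally show ?thesis .
qed

definition prefix_weight :: "('i,'s,'a) prefix \<Rightarrow> real" where
  "prefix_weight h = (\<Prod>i\<in>UNIV. pmf (agent_marginal i W) (map (agent_proj i) h))"

definition cond_weight :: "('i,'s,'a) prefix \<Rightarrow> 'i \<Rightarrow> ('s \<times> 'a) list \<Rightarrow> real" where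
  "cond_weight h i v =
     pmf (agent_marginal i joint_law) (map (agent_proj i) h @ v) / pmf (agent_marginal i W) (map (agent_proj i) h)"

lemma gibbs_prefix_weight: "(\<integral>h. ln (prefix_weight h / pmf W h) \<partial>measure_pmf W) \<le> 0"
proof (rule gibbs_inequality[OF finite_W])
  show "\<And>h. h \<in> set_pmf W \<Longrightarrow> 0 < prefix_weight h"
    by (simp add: prefix_weight_def prod_pos pmf_agent_marginal_pos)
  let ?\<Pi> = "Pi_pmf UNIV undefined (\<lambda>i. agent_marginal i W)"
  let ?split = "\<lambda>(h :: ('i,'s,'a) prefix) i. map (agent_proj i) h"
  have "(\<Sum>h\<in>set_pmf W. prefix_weight h) = (\<Sum>y\<in>?split ` set_pmf W. pmf ?\<Pi> y)"
    unfolding prefix_weight_def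
    by (subst sum.reindex) (auto simp: pmf_Pi intro: inj_on_subset[OF inj_split_agents])
  also have "\<dots> = measure_pmf.prob ?\<Pi> (?split ` set_pmf W)"
    using finite_W by (simp add: measure_measure_pmf_finite)
  finally show "(\<Sum>h\<in>set_pmf W. prefix_weight h) \<le> 1" by simp
qed

lemma gibbs_cond_weight:
  assumes h: "h \<in> set_pmf W"
  shows "(\<integral>v. ln (cond_weight h i v / pmf (agent_marginal i (P h)) v) \<partial>measure_pmf (agent_marginal i (P h))) \<le> 0"
proof (rule gibbs_inequality)
  show "finite (set_pmf (agent_marginal i (P h)))" using finite_P[OF h] by simp
  show "\<And>v. v \<in> set_pmf (agent_marginal i (P h)) \<Longrightarrow> 0 < cond_weight h i v"
    using h unfolding cond_weight_def
    by (auto simp flip: map_append intro!: divide_pos_pos pmf_agent_marginal_pos append_in_set_joint_law)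
  have "(\<Sum>v\<in>set_pmf (agent_marginal i (P h)). cond_weight h i v)
      = (\<Sum>v\<in>set_pmf (agent_marginal i (P h)). pmf (agent_marginal i joint_law) (map (agent_proj i) h @ v))
          / pmf (agent_marginal i W) (map (agent_proj i) h)"
    unfolding cond_weight_def by (simp add: sum_divide_distrib)
  also have "\<dots> \<le> 1"
    using sum_pmf_marginal_extensions_le[of "set_pmf (agent_marginal i (P h))" "map (agent_proj i) h" i]
      finite_P[OF h] length_W[OF h] pmf_agent_marginal_pos[OF h, of i] by simp
  finally show "(\<Sum>v\<in>set_pmf (agent_marginal i (P h)). cond_weight h i v) \<le> 1" .
qed

text \<open>
  The expectation of \<open>marginal_log_ratio\<close> under the joint law is \<open>KL - total correlation\<close>.
  After the history \<open>h\<close> it splits into one Gibbs term for the history and one for each agent's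
  continuation, so it is non-positive.
\<close>

definition marginal_log_ratio :: "('i,'s,'a) prefix \<Rightarrow> real" where
  "marginal_log_ratio x = (\<Sum>i\<in>UNIV. ln (pmf (agent_marginal i joint_law) (map (agent_proj i) x))) - ln (pmf decoupled_law x)"

lemma marginal_log_ratio_append:
  assumes h: "h \<in> set_pmf W" and f: "f \<in> set_pmf (P h)"
  shows "marginal_log_ratio (h @ f) = ln (prefix_weight h / pmf W h)
     + (\<Sum>i\<in>UNIV. ln (cond_weight h i (map (agent_proj i) f) / pmf (agent_marginal i (P h)) (map (agent_proj i) f)))"
proof -
  have hf: "h @ f \<in> set_pmf joint_law" by (rule append_in_set_joint_law[OF h f])
  have pos: "pmf W h > 0" "\<And>i. pmf (agent_marginal i (P h)) (map (agent_proj i) f) > 0"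
    "\<And>i. pmf (agent_marginal i W) (map (agent_proj i) h) > 0"
    "\<And>i. pmf (agent_marginal i joint_law) (map (agent_proj i) h @ map (agent_proj i) f) > 0"
    using h f pmf_agent_marginal_pos[OF hf] by (simp_all add: pmf_positive pmf_agent_marginal_pos)
  then have "(\<Prod>i\<in>UNIV. pmf (agent_marginal i (P h)) (map (agent_proj i) f)) > 0"
    "prefix_weight h > 0" by (simp_all add: prod_pos prefix_weight_def)
  with pos show ?thesis
    unfolding marginal_log_ratio_def prefix_weight_def cond_weight_def pmf_decoupled_law_append[OF h f]
    by (simp add: ln_div ln_mult ln_prod prod_pos sum_subtractf sum.distrib order_less_imp_not_eq2)
qed

lemma integral_marginal_log_ratio_nonpos:
  "(\<integral>x. marginal_log_ratio x \<partial>measure_pmf joint_law) \<le> 0"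
proof -
  have inner: "(\<integral>f. marginal_log_ratio (h @ f) \<partial>measure_pmf (P h)) \<le> ln (prefix_weight h / pmf W h)"
    if h: "h \<in> set_pmf W" for h
  proof -
    define \<psi> where "\<psi> i f = ln (cond_weight h i (map (agent_proj i) f) / pmf (agent_marginal i (P h)) (map (agent_proj i) f))" for i f
    have int: "integrable (measure_pmf (P h)) g" for g :: "_ \<Rightarrow> real"
      by (rule integrable_measure_pmf_finite[OF finite_P[OF h]])
    have "(\<integral>f. marginal_log_ratio (h @ f) \<partial>measure_pmf (P h))
        = (\<integral>f. ln (prefix_weight h / pmf W h) + (\<Sum>i\<in>UNIV. \<psi> i f) \<partial>measure_pmf (P h))"
      by (intro integral_cong_AE) (simp_all add: AE_measure_pmf_iff marginal_log_ratio_append[OF h] \<psi>_def)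
    also have "\<dots> = ln (prefix_weight h / pmf W h) + (\<Sum>i\<in>UNIV. (\<integral>f. \<psi> i f \<partial>measure_pmf (P h)))"
      by (simp add: int integral_sum)
    also have "(\<Sum>i\<in>UNIV. (\<integral>f. \<psi> i f \<partial>measure_pmf (P h))) \<le> 0"
      using gibbs_cond_weight[OF h] by (intro sum_nonpos) (simp add: \<psi>_def)
    finally show ?thesis by simp
  qed
  have "(\<integral>x. marginal_log_ratio x \<partial>measure_pmf joint_law)
      = (\<Sum>h\<in>set_pmf W. pmf W h * (\<integral>f. marginal_log_ratio (h @ f) \<partial>measure_pmf (P h)))"
    using finite_joint_law unfolding joint_law_def
    by (simp add: integral_bind_pmf_finite integral_pmf_finite[OF finite_W])
  also have "\<dots> \<le> (\<Sum>h\<in>set_pmf W. pmf W h * ln (prefix_weight h / pmf W h))"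
    by (intro sum_mono mult_left_mono inner) auto
  also have "\<dots> \<le> 0"
    using gibbs_prefix_weight by (simp add: integral_pmf_finite[OF finite_W])
  finally show ?thesis .
qed

lemma KL_pmf_decoupled_le_total_corr: "KL_pmf joint_law decoupled_law \<le> total_corr_pmf joint_law"
proof -
  have int: "integrable (measure_pmf joint_law) g" for g :: "_ \<Rightarrow> real"
    by (rule integrable_measure_pmf_finite[OF finite_joint_law])
  have "KL_pmf joint_law decoupled_law
      = (\<integral>x. ln (pmf joint_law x) - ln (pmf decoupled_law x) \<partial>measure_pmf joint_law)"
    unfolding KL_pmf_def
    by (intro integral_cong_AE) (simp_all add: AE_measure_pmf_iff ln_divide_pos pmf_positive pmf_decoupled_law_pos)
  also have "\<dots> = total_corr_pmf joint_law + (\<integral>x. marginal_log_ratio x \<partial>measure_pmf joint_law)"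
    using finite_joint_law
    by (simp add: int integral_sum total_corr_pmf_def marginal_log_ratio_def entropy_pmf_eq_integral sum_negf)
  finally show ?thesis using integral_marginal_log_ratio_nonpos by linarith
qed

lemma total_corr_joint_law_nonneg: "total_corr_pmf joint_law \<ge> 0"
  using KL_pmf_nonneg[OF finite_joint_law pmf_decoupled_law_pos] KL_pmf_decoupled_le_total_corr by linarith

lemma measure_joint_minus_decoupled_le:
  "measure_pmf.prob joint_law E - measure_pmf.prob decoupled_law E \<le> sqrt (1 - exp (- total_corr_pmf joint_law))"
proof -
  have "measure_pmf.prob joint_law E - measure_pmf.prob decoupled_law E
      \<le> sqrt (1 - exp (- KL_pmf joint_law decoupled_law))"
    by (rule measure_pmf_diff_le_KL_pmf[OF finite_joint_law finite_decoupled_law pmf_decoupled_law_pos])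
  also have "\<dots> \<le> sqrt (1 - exp (- total_corr_pmf joint_law))"
    using KL_pmf_decoupled_le_total_corr by simp
  finally show ?thesis .
qed


end

section \<open>The first bound: total correlation\<close>

lemma reach_prob_ge: "measure_pmf.prob (P n) {xs. succ_prefix ST SA xs} \<le> reach_prob ST SA P"
  unfolding reach_prob_def by (rule cSUP_upper) (auto intro!: bdd_aboveI[where M=1])

lemma exp_neg_total_corr_le: "exp_neg (total_corr T pol sI) \<le> exp (- tc_prefix T pol sI n)"
proof -
  have le: "ereal (tc_prefix T pol sI n) \<le> total_corr T pol sI"
    unfolding total_corr_def by (rule SUP_upper) simp
  show ?thesis
  proof (cases "total_corr T pol sI")
    case (real r)
    then show ?thesis using le by (simp add: exp_neg_def)
  qed (use le in \<open>simp_all add: exp_neg_def\<close>)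
qed

locale finite_game =
  fixes Sl :: "'i::finite \<Rightarrow> 's set" and Al :: "'i \<Rightarrow> 'a set"
    and T :: "'i \<Rightarrow> 's \<Rightarrow> 'a \<Rightarrow> 's pmf" and pol :: "('i \<Rightarrow> 's) \<Rightarrow> ('i \<Rightarrow> 'a) pmf"
  assumes finite_local_states: "\<And>i. finite (Sl i)" and finite_local_actions: "\<And>i. finite (Al i)"
    and trans: "\<And>i s a. s \<in> Sl i \<Longrightarrow> a \<in> Al i \<Longrightarrow> set_pmf (T i s a) \<subseteq> Sl i"
    and policy: "\<And>s. (\<forall>i. s i \<in> Sl i) \<Longrightarrow> set_pmf (pol s) \<subseteq> {a. \<forall>i. a i \<in> Al i}"
begin

definition joint_states :: "('i \<Rightarrow> 's) set" where "joint_states = {s. \<forall>i. s i \<in> Sl i}"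

definition joint_actions :: "('i \<Rightarrow> 'a) set" where "joint_actions = {a. \<forall>i. a i \<in> Al i}"

definition valid_prefixes :: "nat \<Rightarrow> ('i,'s,'a) prefix set" where
  "valid_prefixes n = {xs. set xs \<subseteq> joint_states \<times> joint_actions \<and> length xs = n}"

lemma finite_joint_states: "finite joint_states"
proof -
  have "joint_states = PiE UNIV Sl" by (auto simp: joint_states_def PiE_def extensional_def)
  then show ?thesis by (simp add: finite_PiE finite_local_states)
qed

lemma finite_joint_actions: "finite joint_actions"
proof -
  have "joint_actions = PiE UNIV Al" by (auto simp: joint_actions_def PiE_def extensional_def)
  then show ?thesis by (simp add: finite_PiE finite_local_actions)
qed

lemma finite_valid_prefixes: "finite (valid_prefixes n)"
  unfolding valid_prefixes_def
  by (rule finite_lists_length_eq) (simp add: finite_joint_states finite_joint_actions)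

lemma set_joint_step: "s \<in> joint_states \<Longrightarrow> a \<in> joint_actions \<Longrightarrow> set_pmf (joint_step T s a) \<subseteq> joint_states"
  using trans by (fastforce simp: joint_step_def set_Pi_pmf PiE_dflt_def joint_states_def joint_actions_def)

lemma set_full_prefix: "s \<in> joint_states \<Longrightarrow> set_pmf (full_prefix T pol n s) \<subseteq> valid_prefixes n"
proof (induction n arbitrary: s)
  case (Suc n)
  have "a \<in> set_pmf (pol s) \<Longrightarrow> a \<in> joint_actions" for a
    using policy Suc.prems by (auto simp: joint_states_def joint_actions_def)
  with Suc set_joint_step show ?case by (fastforce simp: valid_prefixes_def)
qed (simp add: valid_prefixes_def)

lemma finite_full_prefix: "s \<in> joint_states \<Longrightarrow> finite (set_pmf (full_prefix T pol n s))"
  by (rule finite_subset[OF set_full_prefix finite_valid_prefixes])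

lemma last_full_prefix:
  assumes "s \<in> joint_states" "h \<in> set_pmf (full_prefix T pol (Suc k) s)"
  shows "last h \<in> joint_states \<times> joint_actions"
proof -
  have "h \<in> valid_prefixes (Suc k)" using set_full_prefix assms by blast
  then have "h \<noteq> []" "set h \<subseteq> joint_states \<times> joint_actions" by (auto simp: valid_prefixes_def)
  then show ?thesis using last_in_set by blast
qed

lemma set_full_continuation:
  assumes "sa \<in> joint_states \<times> joint_actions"
  shows "set_pmf (full_continuation T pol m sa) \<subseteq> valid_prefixes m"
  using assms set_full_prefix set_joint_step[of "fst sa" "snd sa"]
  by (fastforce simp: full_continuation_def)

lemma finite_full_continuation:
  "sa \<in> joint_states \<times> joint_actions \<Longrightarrow> finite (set_pmf (full_continuation T pol m sa))"
  by (rule finite_subset[OF set_full_continuation finite_valid_prefixes])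

lemma prefix_extension_at_start:
  assumes "sI \<in> joint_states"
  shows "prefix_extension (return_pmf []) (\<lambda>_. full_prefix T pol n sI) 0 n"
  using assms by unfold_locales (auto simp: finite_full_prefix length_full_prefix)

lemma prefix_extension_after_history:
  assumes sI: "sI \<in> joint_states"
  shows "prefix_extension (full_prefix T pol (Suc k) sI) (\<lambda>h. full_continuation T pol m (last h)) (Suc k) m"
proof
  show "finite (set_pmf (full_prefix T pol (Suc k) sI))" by (rule finite_full_prefix[OF sI])
  show "\<And>h. h \<in> set_pmf (full_prefix T pol (Suc k) sI) \<Longrightarrow> length h = Suc k"
    by (rule length_full_prefix)
  show "\<And>h. h \<in> set_pmf (full_prefix T pol (Suc k) sI) \<Longrightarrow> finite (set_pmf (full_continuation T pol m (last h)))"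
    by (rule finite_full_continuation[OF last_full_prefix[OF sI]])
  show "length f = m"
    if h: "h \<in> set_pmf (full_prefix T pol (Suc k) sI)" and f: "f \<in> set_pmf (full_continuation T pol m (last h))" for h f
    using set_full_continuation[OF last_full_prefix[OF sI h]] f by (auto simp: valid_prefixes_def)
qed

lemma tc_prefix_nonneg: "sI \<in> joint_states \<Longrightarrow> tc_prefix T pol sI n \<ge> 0"
  using prefix_extension.total_corr_joint_law_nonneg[OF prefix_extension_at_start]
  by (simp add: tc_prefix_eq_total_corr_pmf prefix_extension.joint_law_def[OF prefix_extension_at_start]
      bind_return_pmf map_pmf_ident)

lemma full_minus_img_prefix_le:
  assumes sI: "sI \<in> joint_states"
  shows "measure_pmf.prob (full_prefix T pol n sI) E - measure_pmf.prob (img_prefix T pol sI L n) E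
           \<le> sqrt (1 - exp (- tc_prefix T pol sI n))"
proof -
  have triv: "measure_pmf.prob (full_prefix T pol n sI) E - measure_pmf.prob (full_prefix T pol n sI) E
      \<le> sqrt (1 - exp (- tc_prefix T pol sI n))"
    using tc_prefix_nonneg[OF sI, of n] by simp
  consider "L = None" | "L = Some 0" | k where "L = Some (Suc k)" "n \<le> Suc k"
    | k m where "L = Some (Suc k)" "n = Suc k + m"
    by (metis le_add_diff_inverse linorder_not_le less_imp_le_nat not0_implies_Suc option.exhaust)
  then show ?thesis
  proof cases
    case 1
    then show ?thesis using triv by (simp add: img_prefix_def)
  next
    case 2
    interpret prefix_extension "return_pmf []" "\<lambda>_. full_prefix T pol n sI" 0 n
      by (rule prefix_extension_at_start[OF sI])
    have "joint_law = full_prefix T pol n sI" "decoupled_law = img_prefix T pol sI L n"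
      using 2 by (simp_all add: joint_law_def decoupled_law_def img_prefix_def
                    indep_phase_initial_eq_prod_marginals bind_return_pmf map_pmf_ident)
    then show ?thesis
      using measure_joint_minus_decoupled_le by (simp add: tc_prefix_eq_total_corr_pmf)
  next
    case 3
    then show ?thesis using triv by (simp add: img_prefix_def loss_prefix_before_loss)
  next
    case (4 k m)
    interpret prefix_extension "full_prefix T pol (Suc k) sI" "\<lambda>h. full_continuation T pol m (last h)" "Suc k" m
      by (rule prefix_extension_after_history[OF sI])
    have "joint_law = full_prefix T pol n sI"
      unfolding joint_law_def 4(2) by (rule full_prefix_split[symmetric])
    moreover have "decoupled_law = img_prefix T pol sI L n"
      unfolding decoupled_law_def 4 img_prefix_def
      by (simp only: option.case nat.case loss_prefix_split loss_continuation_eq_prod_marginals)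
    ultimately show ?thesis
      using measure_joint_minus_decoupled_le by (simp add: tc_prefix_eq_total_corr_pmf)
  qed
qed

lemma img_geo_prefix_ge_full_minus:
  assumes sI: "sI \<in> joint_states"
  shows "measure_pmf.prob (full_prefix T pol n sI) E - sqrt (1 - exp (- tc_prefix T pol sI n))
           \<le> measure_pmf.prob (img_geo_prefix T pol sI p n) E"
proof -
  have "measure_pmf.prob (img_geo_prefix T pol sI p n) E
      = (\<integral>L. measure_pmf.prob (img_prefix T pol sI L n) E \<partial>measure_pmf (loss_dist p))"
    unfolding img_geo_prefix_def by (rule measure_bind_pmf_real)
  moreover have "measure_pmf.prob (full_prefix T pol n sI) E - sqrt (1 - exp (- tc_prefix T pol sI n))
      \<le> (\<integral>L. measure_pmf.prob (img_prefix T pol sI L n) E \<partial>measure_pmf (loss_dist p))"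
    using full_minus_img_prefix_le[OF sI, of n E]
    by (intro measure_pmf.integral_ge_const measure_pmf.integrable_const_bound[where B=1])
       (auto simp: AE_measure_pmf_iff algebra_simps)
  ultimately show ?thesis by simp
qed

lemma v_img_ge_v_full_minus_total_corr:
  assumes sI: "sI \<in> joint_states"
  shows "v_full T pol sI ST SA - sqrt (1 - exp_neg (total_corr T pol sI)) \<le> v_img T pol sI ST SA p"
proof -
  have "measure_pmf.prob (full_prefix T pol n sI) {xs. succ_prefix ST SA xs}
      \<le> v_img T pol sI ST SA p + sqrt (1 - exp_neg (total_corr T pol sI))" for n
  proof -
    have "sqrt (1 - exp (- tc_prefix T pol sI n)) \<le> sqrt (1 - exp_neg (total_corr T pol sI))"
      using exp_neg_total_corr_le by simp
    moreover have "measure_pmf.prob (img_geo_prefix T pol sI p n) {xs. succ_prefix ST SA xs}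
        \<le> v_img T pol sI ST SA p"
      unfolding v_img_def by (rule reach_prob_ge)
    ultimately show ?thesis
      using img_geo_prefix_ge_full_minus[OF sI, where n=n and E="{xs. succ_prefix ST SA xs}" and p=p]
      by linarith
  qed
  then have "v_full T pol sI ST SA \<le> v_img T pol sI ST SA p + sqrt (1 - exp_neg (total_corr T pol sI))"
    unfolding v_full_def reach_prob_def by (intro cSUP_least) auto
  then show ?thesis by simp
qed


end

section \<open>The second bound: success before the loss time\<close>

definition state_prefix :: "nat \<Rightarrow> ('i,'s,'a) prefix \<Rightarrow> ('i \<Rightarrow> 's) list" where
  "state_prefix j xs = take j (map fst xs)"

lemma state_prefix_Cons: "state_prefix (Suc j) ((s, a) # rest) = s # state_prefix j rest"
  by (simp add: state_prefix_def)

lemma length_indep_phase: "xs \<in> set_pmf (indep_phase T pol n B) \<Longrightarrow> length xs = n"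
  by (auto simp: indep_phase_eq_merge)

lemma indep_phase_first:
  assumes "xs \<in> set_pmf (indep_phase T pol (Suc n) B)"
  shows "fst (xs ! 0) = (\<lambda>i. B i i)"
proof -
  from assms obtain trs where trs: "trs \<in> set_pmf (Pi_pmf UNIV undefined (\<lambda>i. agent_run T pol i (Suc n) (B i)))"
    and xs: "xs = merge_agents (Suc n) trs" by (auto simp: indep_phase_eq_merge)
  have tr: "trs i \<in> set_pmf (agent_run T pol i (Suc n) (B i))" for i
    using trs by (simp add: set_Pi_pmf PiE_dflt_def)
  have "fst (trs i ! 0) = B i i" for i using tr[of i] by auto
  then show ?thesis using xs by (simp add: merge_agents_def fun_eq_iff del: upt_Suc)
qed

lemma map_state_prefix_Suc_0_full_prefix:
  "map_pmf (state_prefix (Suc 0)) (full_prefix T pol n s) = return_pmf (if n = 0 then [] else [s])"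
proof (cases n)
  case (Suc n')
  have "map_pmf (state_prefix (Suc 0)) (full_prefix T pol n s) = map_pmf (\<lambda>_. [s]) (full_prefix T pol n s)"
  proof (rule map_pmf_cong[OF refl])
    fix xs assume xs: "xs \<in> set_pmf (full_prefix T pol n s)"
    then obtain y ys where "xs = y # ys" using Suc length_full_prefix[OF xs] by (cases xs) auto
    then show "state_prefix (Suc 0) xs = [s]" using full_prefix_first xs Suc by (fastforce simp: state_prefix_def)
  qed
  then show ?thesis using Suc by simp
qed (simp add: state_prefix_def)

lemma map_state_prefix_Suc_0_indep_phase:
  "map_pmf (state_prefix (Suc 0)) (indep_phase T pol n B) = return_pmf (if n = 0 then [] else [\<lambda>i. B i i])"
proof (cases n)
  case (Suc n')
  have "map_pmf (state_prefix (Suc 0)) (indep_phase T pol n B) = map_pmf (\<lambda>_. [\<lambda>i. B i i]) (indep_phase T pol n B)"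
  proof (rule map_pmf_cong[OF refl])
    fix xs assume xs: "xs \<in> set_pmf (indep_phase T pol n B)"
    then obtain y ys where "xs = y # ys" using Suc length_indep_phase[OF xs] by (cases xs) auto
    then show "state_prefix (Suc 0) xs = [\<lambda>i. B i i]" using indep_phase_first xs Suc by (fastforce simp: state_prefix_def)
  qed
  then show ?thesis using Suc by simp
qed (simp add: state_prefix_def indep_phase_0)

lemma map_state_prefix_Suc_step:
  "map_pmf (state_prefix (Suc j)) (bind_pmf (pol s) (\<lambda>a. bind_pmf (joint_step T s a) (\<lambda>s'.
     bind_pmf (R a s') (\<lambda>rest. return_pmf ((s, a) # rest))))) =
   bind_pmf (pol s) (\<lambda>a. bind_pmf (joint_step T s a) (\<lambda>s'. map_pmf ((#) s) (map_pmf (state_prefix j) (R a s'))))"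
  by (simp add: map_bind_pmf state_prefix_Cons pmf.map_comp o_def map_pmf_def[symmetric])

text \<open>
  The agents separate only at time \<open>Suc k\<close>, and each of them keeps its own real state
  then; so the joint states up to time \<open>Suc k\<close> are distributed as under full communication.
\<close>

lemma map_state_prefix_loss_prefix:
  "map_pmf (state_prefix (Suc (Suc k))) (loss_prefix T pol k n s)
     = map_pmf (state_prefix (Suc (Suc k))) (full_prefix T pol n s)"
proof (induction k arbitrary: n s)
  case 0
  show ?case
  proof (cases n)
    case (Suc n')
    have "map_pmf (state_prefix (Suc 0)) (bind_pmf (Pi_pmf UNIV undefined (\<lambda>i. joint_step T s a))
            (\<lambda>imag. indep_phase T pol n' (\<lambda>i. (imag i)(i := s' i))))
        = map_pmf (state_prefix (Suc 0)) (full_prefix T pol n' s')" for a s'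
      by (simp add: map_bind_pmf map_state_prefix_Suc_0_indep_phase map_state_prefix_Suc_0_full_prefix)
    then show ?thesis unfolding Suc loss_prefix.simps full_prefix.simps nat.case
      by (subst map_state_prefix_Suc_step, subst map_state_prefix_Suc_step, simp only:)
  qed simp
next
  case (Suc k)
  note IH = Suc.IH
  show ?case
  proof (cases n)
    case (Suc n')
    show ?thesis unfolding Suc loss_prefix.simps full_prefix.simps nat.case
      by (subst map_state_prefix_Suc_step, subst map_state_prefix_Suc_step, simp only: IH)
  qed simp
qed

lemma map_state_prefix_img_prefix:
  "map_pmf (state_prefix (Suc t)) (img_prefix T pol sI (Some t) n)
     = map_pmf (state_prefix (Suc t)) (full_prefix T pol n sI)"
proof (cases t)
  case 0
  then show ?thesis
    by (simp add: img_prefix_def map_state_prefix_Suc_0_indep_phase map_state_prefix_Suc_0_full_prefix)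
qed (simp add: img_prefix_def map_state_prefix_loss_prefix)

definition reach_avoid_list :: "('i \<Rightarrow> 's) set \<Rightarrow> ('i \<Rightarrow> 's) set \<Rightarrow> ('i \<Rightarrow> 's) list \<Rightarrow> bool" where
  "reach_avoid_list ST SA ys \<longleftrightarrow> (\<exists>M<length ys. ys ! M \<in> ST \<and> (\<forall>j<M. ys ! j \<notin> SA))"

definition succeeds_by :: "('i \<Rightarrow> 's) set \<Rightarrow> ('i \<Rightarrow> 's) set \<Rightarrow> nat \<Rightarrow> ('i,'s,'a) prefix \<Rightarrow> bool" where
  "succeeds_by ST SA t xs \<longleftrightarrow> reach_avoid_list ST SA (state_prefix (Suc t) xs)"

definition is_success_time :: "('i \<Rightarrow> 's) set \<Rightarrow> ('i \<Rightarrow> 's) set \<Rightarrow> ('i,'s,'a) prefix \<Rightarrow> nat \<Rightarrow> bool" where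
  "is_success_time ST SA xs M \<longleftrightarrow> M < length xs \<and> fst (xs ! M) \<in> ST \<and> (\<forall>j<M. fst (xs ! j) \<notin> SA)"

definition success_time :: "('i \<Rightarrow> 's) set \<Rightarrow> ('i \<Rightarrow> 's) set \<Rightarrow> ('i,'s,'a) prefix \<Rightarrow> nat" where
  "success_time ST SA xs = (LEAST M. is_success_time ST SA xs M)"

lemma succ_prefix_iff_success_time: "succ_prefix ST SA xs \<longleftrightarrow> (\<exists>M. is_success_time ST SA xs M)"
  by (auto simp: succ_prefix_def is_success_time_def)

lemma is_success_time_success_time:
  "succ_prefix ST SA xs \<Longrightarrow> is_success_time ST SA xs (success_time ST SA xs)"
  unfolding succ_prefix_iff_success_time success_time_def by (rule LeastI_ex)

lemma success_time_le: "is_success_time ST SA xs M \<Longrightarrow> success_time ST SA xs \<le> M"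
  unfolding success_time_def by (rule Least_le)

lemma succeeds_by_iff: "succeeds_by ST SA t xs \<longleftrightarrow> succ_prefix ST SA xs \<and> success_time ST SA xs \<le> t"
proof
  assume "succeeds_by ST SA t xs"
  then obtain M where "M \<le> t" "is_success_time ST SA xs M"
    by (auto simp: succeeds_by_def reach_avoid_list_def state_prefix_def is_success_time_def less_Suc_eq_le)
  then show "succ_prefix ST SA xs \<and> success_time ST SA xs \<le> t"
    using success_time_le by (fastforce simp: succ_prefix_iff_success_time)
next
  assume "succ_prefix ST SA xs \<and> success_time ST SA xs \<le> t"
  then show "succeeds_by ST SA t xs"
    using is_success_time_success_time[of ST SA xs]
    by (auto simp: succeeds_by_def reach_avoid_list_def state_prefix_def is_success_time_def
             intro!: exI[of _ "success_time ST SA xs"])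
qed

lemma img_prefix_succeeds_ge:
  "measure_pmf.prob (full_prefix T pol n sI) {xs. succeeds_by ST SA t xs}
     \<le> measure_pmf.prob (img_prefix T pol sI (Some t) n) {xs. succ_prefix ST SA xs}"
proof -
  have "measure_pmf.prob (full_prefix T pol n sI) {xs. succeeds_by ST SA t xs}
      = measure_pmf.prob (map_pmf (state_prefix (Suc t)) (full_prefix T pol n sI)) {ys. reach_avoid_list ST SA ys}"
    by (simp add: succeeds_by_def vimage_def)
  also have "\<dots> = measure_pmf.prob (img_prefix T pol sI (Some t) n) {xs. succeeds_by ST SA t xs}"
    by (simp only: map_state_prefix_img_prefix[symmetric]) (simp add: succeeds_by_def vimage_def)
  also have "\<dots> \<le> measure_pmf.prob (img_prefix T pol sI (Some t) n) {xs. succ_prefix ST SA xs}"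
    by (intro measure_pmf.finite_measure_mono) (auto simp: succeeds_by_iff)
  finally show ?thesis .
qed

lemma prob_geometric_pmf_ge:
  assumes "0 < p" "p \<le> 1"
  shows "measure_pmf.prob (geometric_pmf p) {M..} = (1 - p) ^ M"
proof -
  have "measure_pmf.prob (geometric_pmf p) {..<M} = p * (\<Sum>t<M. (1 - p) ^ t)"
    using assms by (simp add: measure_measure_pmf_finite sum_distrib_left mult.commute)
  also have "\<dots> = 1 - (1 - p) ^ M" using assms by (simp add: sum_gp_strict)
  finally show ?thesis
    using measure_pmf.prob_compl[of "{..<M}" "geometric_pmf p"] by (simp add: Compl_eq_Diff_UNIV[symmetric])
qed

definition succeeds_before_loss ::
  "('i \<Rightarrow> 's) set \<Rightarrow> ('i \<Rightarrow> 's) set \<Rightarrow> nat option \<Rightarrow> ('i,'s,'a) prefix \<Rightarrow> bool" where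
  "succeeds_before_loss ST SA L xs =
     (case L of None \<Rightarrow> succ_prefix ST SA xs | Some t \<Rightarrow> succeeds_by ST SA t xs)"

lemma prob_succeeds_before_loss:
  assumes "0 \<le> p" "p \<le> 1" "succ_prefix ST SA xs"
  shows "measure_pmf.prob (loss_dist p) {L. succeeds_before_loss ST SA L xs} = (1 - p) ^ success_time ST SA xs"
proof -
  define M where "M = success_time ST SA xs"
  have set: "{L. succeeds_before_loss ST SA L xs} = insert None (Some ` {M..})"
  proof (rule set_eqI)
    fix L show "L \<in> {L. succeeds_before_loss ST SA L xs} \<longleftrightarrow> L \<in> insert None (Some ` {M..})"
      using assms(3) by (cases L) (auto simp: succeeds_before_loss_def succeeds_by_iff M_def)
  qed
  show ?thesis
  proof (cases "p = 0")
    case False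
    then have "measure_pmf.prob (loss_dist p) {L. succeeds_before_loss ST SA L xs}
        = measure_pmf.prob (geometric_pmf p) (Some -` insert None (Some ` {M..}))"
      by (simp add: loss_dist_def set del: measure_map_pmf) (simp only: measure_map_pmf)
    also have "Some -` insert None (Some ` {M..}) = {M..}" by auto
    finally show ?thesis using prob_geometric_pmf_ge assms False by (simp add: M_def)
  qed (simp add: loss_dist_def set)
qed

lemma img_prefix_succ_ge_succeeds_before_loss:
  "measure_pmf.prob (full_prefix T pol n sI) {xs. succeeds_before_loss ST SA L xs}
     \<le> measure_pmf.prob (img_prefix T pol sI L n) {xs. succ_prefix ST SA xs}"
  by (cases L) (simp add: img_prefix_def succeeds_before_loss_def,
                simp add: succeeds_before_loss_def img_prefix_succeeds_ge)

lemma integral_prob_finite_swap: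
  assumes fin: "finite (set_pmf M)"
  shows "(\<integral>y. measure_pmf.prob M {x. R y x} \<partial>measure_pmf N)
           = (\<Sum>x\<in>set_pmf M. pmf M x * measure_pmf.prob N {y. R y x})"
proof -
  have "measure_pmf.prob M {x. R y x} = (\<Sum>x\<in>set_pmf M. pmf M x * indicator {y. R y x} y)" for y
    using measure_pmf_eq_sum[OF fin order_refl, of "{x. R y x}"]
    by (simp add: sum.inter_restrict[OF fin] indicator_def of_bool_def if_distrib cong: if_cong)
  moreover have "integrable (measure_pmf N) (\<lambda>y. indicator {y. R y x} y :: real)" for x
    by (rule measure_pmf.integrable_const_bound[where B=1]) auto
  ultimately show ?thesis by (simp add: integral_sum)
qed

context finite_game
begin

lemma img_geo_prefix_succ_ge:
  assumes sI: "sI \<in> joint_states" and p: "0 \<le> p" "p \<le> 1"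
  shows "(\<Sum>xs\<in>set_pmf (full_prefix T pol n sI) \<inter> {xs. succ_prefix ST SA xs}.
            pmf (full_prefix T pol n sI) xs * (1 - p) ^ success_time ST SA xs)
         \<le> measure_pmf.prob (img_geo_prefix T pol sI p n) {xs. succ_prefix ST SA xs}"
proof -
  let ?F = "full_prefix T pol n sI"
  have fin: "finite (set_pmf ?F)" by (rule finite_full_prefix[OF sI])
  have never: "{L. succeeds_before_loss ST SA L xs} = {}" if "\<not> succ_prefix ST SA xs" for xs
    using that by (auto simp: succeeds_before_loss_def succeeds_by_iff split: option.splits)
  have "(\<Sum>xs\<in>set_pmf ?F \<inter> {xs. succ_prefix ST SA xs}. pmf ?F xs * (1 - p) ^ success_time ST SA xs)
      = (\<Sum>xs\<in>set_pmf ?F. pmf ?F xs * measure_pmf.prob (loss_dist p) {L. succeeds_before_loss ST SA L xs})"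
    unfolding sum.inter_restrict[OF fin]
    by (intro sum.cong refl) (simp add: prob_succeeds_before_loss[OF p] never)
  also have "\<dots> = (\<integral>L. measure_pmf.prob ?F {xs. succeeds_before_loss ST SA L xs} \<partial>measure_pmf (loss_dist p))"
    by (rule integral_prob_finite_swap[OF fin, symmetric])
  also have "\<dots> \<le> (\<integral>L. measure_pmf.prob (img_prefix T pol sI L n) {xs. succ_prefix ST SA xs} \<partial>measure_pmf (loss_dist p))"
    by (intro integral_mono img_prefix_succ_ge_succeeds_before_loss measure_pmf.integrable_const_bound[where B=1]) auto
  also have "\<dots> = measure_pmf.prob (img_geo_prefix T pol sI p n) {xs. succ_prefix ST SA xs}"
    unfolding img_geo_prefix_def by (rule measure_bind_pmf_real[symmetric])
  finally show ?thesis .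
qed


end

section \<open>Finiteness of the expected path length\<close>

lemma full_prefix_drop:
  "xs \<in> set_pmf (full_prefix T pol n s) \<Longrightarrow> t < n \<Longrightarrow> drop t xs \<in> set_pmf (full_prefix T pol (n - t) (fst (xs ! t)))"
proof (induction t arbitrary: n s xs)
  case 0
  then obtain n' where "n = Suc n'" by (cases n) auto
  then show ?case using 0 full_prefix_first[of xs T pol n' s] by simp
next
  case (Suc t)
  then obtain n' where n: "n = Suc n'" by (cases n) auto
  from Suc.prems(1) n obtain a s' rest where "rest \<in> set_pmf (full_prefix T pol n' s')" and "xs = (s, a) # rest"
    by auto
  then show ?case using Suc.IH Suc.prems(2) n by simp
qed

lemma map_take_full_prefix: "j \<le> n \<Longrightarrow> map_pmf (take j) (full_prefix T pol n s) = full_prefix T pol j s"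
proof (induction n arbitrary: j s)
  case (Suc n)
  show ?case
  proof (cases j)
    case (Suc j')
    then have "map_pmf (take j) (full_prefix T pol (Suc n) s) =
      bind_pmf (pol s) (\<lambda>a. bind_pmf (joint_step T s a) (\<lambda>s'.
        map_pmf ((#) (s, a)) (map_pmf (take j') (full_prefix T pol n s'))))"
      by (simp add: map_bind_pmf pmf.map_comp o_def map_pmf_def[symmetric])
    also have "\<dots> = full_prefix T pol j s"
      using Suc.IH Suc.prems \<open>j = Suc j'\<close> by (simp add: map_pmf_def)
    finally show ?thesis .
  qed simp
qed simp

abbreviation stop_states ::
  "('i::finite \<Rightarrow> 's \<Rightarrow> 'a \<Rightarrow> 's pmf) \<Rightarrow> (('i \<Rightarrow> 's) \<Rightarrow> ('i \<Rightarrow> 'a) pmf)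
   \<Rightarrow> ('i \<Rightarrow> 's) set \<Rightarrow> ('i \<Rightarrow> 's) set \<Rightarrow> ('i \<Rightarrow> 's) set" where
  "stop_states T pol ST SA \<equiv> ST \<union> dead_set T pol ST SA"

lemma state_before_success_not_dead:
  assumes xs: "xs \<in> set_pmf (full_prefix T pol n s)" and succ: "succ_prefix ST SA xs"
    and t: "t < success_time ST SA xs"
  shows "fst (xs ! t) \<notin> dead_set T pol ST SA"
proof
  assume dead: "fst (xs ! t) \<in> dead_set T pol ST SA"
  let ?M = "success_time ST SA xs" and ?s = "fst (xs ! t)"
  have M: "is_success_time ST SA xs ?M" by (rule is_success_time_success_time[OF succ])
  have tn: "t < n" using M t length_full_prefix[OF xs] by (simp add: is_success_time_def)
  have ys: "drop t xs \<in> set_pmf (full_prefix T pol (n - t) ?s)" by (rule full_prefix_drop[OF xs tn])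
  have "is_success_time ST SA (drop t xs) (?M - t)"
    using M t by (auto simp: is_success_time_def add.commute)
  then have "succ_prefix ST SA (drop t xs)" by (auto simp: succ_prefix_iff_success_time)
  then have "0 < measure_pmf.prob (full_prefix T pol (n - t) ?s) {xs. succ_prefix ST SA xs}"
    using ys by (auto simp: measure_pmf_posI)
  also have "\<dots> \<le> reach_prob ST SA (\<lambda>n. full_prefix T pol n ?s)" by (rule reach_prob_ge)
  finally show False using dead by (simp add: dead_set_def)
qed

lemma success_time_lt_trunc_len:
  assumes xs: "xs \<in> set_pmf (full_prefix T pol n s)" and succ: "succ_prefix ST SA xs"
  shows "success_time ST SA xs < trunc_len (stop_states T pol ST SA) n xs"
proof -
  let ?M = "success_time ST SA xs" and ?TD = "stop_states T pol ST SA"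
  have M: "is_success_time ST SA xs ?M" by (rule is_success_time_success_time[OF succ])
  have ex: "\<exists>t<n. fst (xs ! t) \<in> ?TD" using M length_full_prefix[OF xs] by (auto simp: is_success_time_def)
  have "fst (xs ! t) \<notin> ?TD" if "t < ?M" for t
  proof
    assume "fst (xs ! t) \<in> ?TD"
    then have "is_success_time ST SA xs t"
      using M that state_before_success_not_dead[OF xs succ that] by (auto simp: is_success_time_def)
    then show False using success_time_le that by fastforce
  qed
  then have "?M \<le> (LEAST t. fst (xs ! t) \<in> ?TD)"
    using ex LeastI_ex[of "\<lambda>t. fst (xs ! t) \<in> ?TD"] not_le by blast
  then show ?thesis using ex by (simp add: trunc_len_def)
qed

definition avoids :: "('i \<Rightarrow> 's) set \<Rightarrow> ('i,'s,'a) prefix \<Rightarrow> bool" where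
  "avoids TD xs \<longleftrightarrow> (\<forall>j<length xs. fst (xs ! j) \<notin> TD)"

lemma avoids_append: "avoids TD (h @ r) \<longleftrightarrow> avoids TD h \<and> avoids TD r"
  by (auto simp: avoids_def nth_append) (metis add_diff_cancel_left' not_add_less1 nat_add_left_cancel_less)

lemma sum_indicator_eq_card:
  "(\<Sum>t<(n::nat). indicator {x. P t x} x :: real) = real (card {t. t < n \<and> P t x})"
proof -
  have "(\<Sum>t<(n::nat). indicator {x. P t x} x :: real) = (\<Sum>t<n. if P t x then 1 else 0)"
    by (rule sum.cong) (auto simp: indicator_def)
  also have "\<dots> = (\<Sum>t\<in>{t\<in>{..<n}. P t x}. (1::real))"
    by (rule sum.inter_filter[symmetric]) simp
  also have "\<dots> = real (card {t\<in>{..<n}. P t x})" by (rule real_of_card[symmetric])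
  also have "{t\<in>{..<n}. P t x} = {t. t < n \<and> P t x}" by auto
  finally show ?thesis .
qed

lemma trunc_len_le_card_avoiding:
  assumes len: "length xs = n"
  shows "trunc_len TD n xs \<le> Suc (card {t. t < n \<and> avoids TD (take (Suc t) xs)})"
proof -
  define C where "C = {t. t < n \<and> avoids TD (take (Suc t) xs)}"
  show ?thesis
  proof (cases "\<exists>t<n. fst (xs ! t) \<in> TD")
    case True
    define f where "f = (LEAST t. fst (xs ! t) \<in> TD)"
    obtain t0 where t0: "t0 < n" "fst (xs ! t0) \<in> TD" using True by blast
    have "f \<le> t0" unfolding f_def by (rule Least_le) (rule t0(2))
    moreover have "fst (xs ! j) \<notin> TD" if "j < f" for j using that unfolding f_def by (rule not_less_Least)
    ultimately have "{..<f} \<subseteq> C" using t0 len by (auto simp: C_def avoids_def)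
    then have "f \<le> card C" using card_mono[of C "{..<f}"] by (simp add: C_def)
    then show ?thesis using True by (simp add: trunc_len_def f_def C_def)
  next
    case False
    then have "C = {..<n}" using len by (auto simp: C_def avoids_def)
    moreover have "trunc_len TD n xs = n" unfolding trunc_len_def by (rule if_not_P[OF False])
    ultimately show ?thesis by (simp add: C_def)
  qed
qed

lemma trunc_len_le_sum_avoiding:
  assumes "length xs = n"
  shows "real (trunc_len TD n xs) \<le> 1 + (\<Sum>t<n. indicator {xs. avoids TD (take (Suc t) xs)} xs)"
  using trunc_len_le_card_avoiding[OF assms, of TD] by (simp add: sum_indicator_eq_card)

lemma sum_div_eq:
  fixes f :: "nat \<Rightarrow> real"
  shows "(\<Sum>t<N * c. f (t div N)) = real N * (\<Sum>j<c. f j)"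
proof (induction c)
  case (Suc c)
  have split: "{..<N * Suc c} = {..<N * c} \<union> {N * c..<N * c + N}" by auto
  have "(\<Sum>t\<in>{N * c..<N * c + N}. f (t div N)) = (\<Sum>t\<in>{N * c..<N * c + N}. f c)"
    by (intro sum.cong refl arg_cong[where f=f] div_nat_eqI) auto
  moreover have "(\<Sum>t<N * Suc c. f (t div N)) = (\<Sum>t<N * c. f (t div N)) + (\<Sum>t\<in>{N * c..<N * c + N}. f (t div N))"
    unfolding split by (rule sum.union_disjoint) auto
  ultimately show ?case using Suc.IH by (simp add: distrib_left)
qed simp

lemma sum_power_div_le:
  fixes \<beta> :: real
  assumes N: "N \<ge> 1" and b: "0 \<le> \<beta>" "\<beta> < 1"
  shows "(\<Sum>t<n. \<beta> ^ (t div N)) \<le> real N / (1 - \<beta>)"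
proof -
  have "(\<Sum>t<n. \<beta> ^ (t div N)) \<le> (\<Sum>t<N * n. \<beta> ^ (t div N))"
    using N b by (intro sum_mono2) auto
  also have "\<dots> = real N * (\<Sum>j<n. \<beta> ^ j)" by (rule sum_div_eq)
  also have "\<dots> \<le> real N * (1 / (1 - \<beta>))"
    using b by (intro mult_left_mono) (simp_all add: sum_gp_strict divide_right_mono)
  finally show ?thesis by simp
qed

context finite_game
begin

definition avoid_prob :: "('i \<Rightarrow> 's) set \<Rightarrow> nat \<Rightarrow> ('i \<Rightarrow> 's) \<Rightarrow> real" where
  "avoid_prob TD n s = measure_pmf.prob (full_prefix T pol n s) {xs. avoids TD xs}"

lemma avoid_prob_antimono: "j \<le> n \<Longrightarrow> avoid_prob TD n s \<le> avoid_prob TD j s"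
proof -
  assume jn: "j \<le> n"
  have "avoid_prob TD n s \<le> measure_pmf.prob (full_prefix T pol n s) (take j -` {xs. avoids TD xs})"
    unfolding avoid_prob_def by (intro measure_pmf.finite_measure_mono) (auto simp: avoids_def)
  also have "\<dots> = avoid_prob TD j s"
    by (simp flip: map_take_full_prefix[OF jn] add: avoid_prob_def)
  finally show ?thesis .
qed

lemma exists_succ_prefix_pos:
  assumes "s \<notin> dead_set T pol ST SA"
  obtains n where "measure_pmf.prob (full_prefix T pol n s) {xs. succ_prefix ST SA xs} > 0"
proof -
  have "\<not> (\<forall>n. measure_pmf.prob (full_prefix T pol n s) {xs. succ_prefix ST SA xs} \<le> 0)"
  proof
    assume "\<forall>n. measure_pmf.prob (full_prefix T pol n s) {xs. succ_prefix ST SA xs} \<le> 0"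
    then have "reach_prob ST SA (\<lambda>n. full_prefix T pol n s) \<le> 0"
      unfolding reach_prob_def by (intro cSUP_least) auto
    moreover have "0 \<le> reach_prob ST SA (\<lambda>n. full_prefix T pol n s)"
      by (rule order_trans[OF measure_nonneg reach_prob_ge])
    ultimately show False using assms by (simp add: dead_set_def)
  qed
  then show ?thesis using that by (auto simp: not_le)
qed

lemma avoid_prob_lt_1: "\<exists>n\<ge>1. avoid_prob (stop_states T pol ST SA) n s < 1"
proof (cases "s \<in> stop_states T pol ST SA")
  case True
  have "avoid_prob (stop_states T pol ST SA) 1 s = 0"
    unfolding avoid_prob_def measure_pmf_zero_iff
    using True full_prefix_first[of _ T pol 0 s] length_full_prefix[of _ T pol 1 s]
    by (fastforce simp: avoids_def)
  then show ?thesis by (intro exI[of _ 1]) simp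
next
  case False
  then obtain n where pos: "measure_pmf.prob (full_prefix T pol n s) {xs. succ_prefix ST SA xs} > 0"
    using exists_succ_prefix_pos by blast
  then have "n \<ge> 1" by (cases n) (auto simp: succ_prefix_def)
  have "avoid_prob (stop_states T pol ST SA) n s + measure_pmf.prob (full_prefix T pol n s) {xs. succ_prefix ST SA xs}
      = measure_pmf.prob (full_prefix T pol n s)
          ({xs. avoids (stop_states T pol ST SA) xs} \<union> {xs. succ_prefix ST SA xs})"
    unfolding avoid_prob_def
    by (rule measure_pmf.finite_measure_Union[symmetric]) (auto simp: avoids_def succ_prefix_def)
  also have "\<dots> \<le> 1" by simp
  finally show ?thesis using pos \<open>n \<ge> 1\<close> by (intro exI[of _ n]) auto
qed

lemma uniform_avoid_prob_lt_1:
  assumes ne: "joint_states \<noteq> {}"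
  obtains N \<beta> where "N \<ge> 1" "0 \<le> \<beta>" "\<beta> < 1"
    "\<And>s. s \<in> joint_states \<Longrightarrow> avoid_prob (stop_states T pol ST SA) N s \<le> \<beta>"
proof -
  let ?TD = "stop_states T pol ST SA"
  obtain nf where nf: "\<And>s. nf s \<ge> 1 \<and> avoid_prob ?TD (nf s) s < 1"
    using avoid_prob_lt_1 by metis
  define N where "N = Max (nf ` joint_states)"
  have nfN: "nf s \<le> N" if "s \<in> joint_states" for s unfolding N_def using finite_joint_states that by simp
  define \<beta> where "\<beta> = Max ((\<lambda>s. avoid_prob ?TD N s) ` joint_states)"
  have "\<beta> \<in> (\<lambda>s. avoid_prob ?TD N s) ` joint_states"
    unfolding \<beta>_def using finite_joint_states ne by (intro Max_in) auto
  moreover have "avoid_prob ?TD N s < 1" if "s \<in> joint_states" for s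
    using avoid_prob_antimono[OF nfN[OF that], of ?TD s] nf[of s] by simp
  ultimately have "\<beta> < 1" "0 \<le> \<beta>" by (auto simp: avoid_prob_def)
  moreover have "N \<ge> 1" using ne nfN nf by (meson all_not_in_conv order_trans)
  moreover have "avoid_prob ?TD N s \<le> \<beta>" if "s \<in> joint_states" for s
    unfolding \<beta>_def using finite_joint_states that by simp
  ultimately show ?thesis using that by blast
qed

definition max_avoid_prob :: "('i \<Rightarrow> 's) set \<Rightarrow> nat \<Rightarrow> real" where
  "max_avoid_prob TD m = Max ((\<lambda>s. avoid_prob TD m s) ` joint_states)"

lemma avoid_prob_le_max: "s \<in> joint_states \<Longrightarrow> avoid_prob TD m s \<le> max_avoid_prob TD m"
  unfolding max_avoid_prob_def using finite_joint_states by simp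

lemma max_avoid_prob_le:
  "joint_states \<noteq> {} \<Longrightarrow> (\<And>s. s \<in> joint_states \<Longrightarrow> avoid_prob TD m s \<le> c) \<Longrightarrow> max_avoid_prob TD m \<le> c"
  unfolding max_avoid_prob_def using finite_joint_states by simp

lemma max_avoid_prob_nonneg:
  assumes "joint_states \<noteq> {}"
  shows "0 \<le> max_avoid_prob TD m"
proof -
  obtain s where s: "s \<in> joint_states" using assms by blast
  have "0 \<le> avoid_prob TD m s" by (simp add: avoid_prob_def)
  also have "\<dots> \<le> max_avoid_prob TD m" by (rule avoid_prob_le_max[OF s])
  finally show ?thesis .
qed

lemma max_avoid_prob_antimono: "joint_states \<noteq> {} \<Longrightarrow> j \<le> n \<Longrightarrow> max_avoid_prob TD n \<le> max_avoid_prob TD j"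
  by (rule max_avoid_prob_le) (auto intro: order_trans[OF avoid_prob_antimono avoid_prob_le_max])

lemma avoid_prob_continuation_le:
  assumes "sa \<in> joint_states \<times> joint_actions"
  shows "measure_pmf.prob (full_continuation T pol m sa) {xs. avoids TD xs} \<le> max_avoid_prob TD m"
proof -
  have "measure_pmf.prob (full_continuation T pol m sa) {xs. avoids TD xs}
      = (\<integral>s'. avoid_prob TD m s' \<partial>measure_pmf (joint_step T (fst sa) (snd sa)))"
    unfolding full_continuation_def avoid_prob_def by (rule measure_bind_pmf_real)
  also have "\<dots> \<le> max_avoid_prob TD m"
  proof (rule measure_pmf.integral_le_const)
    show "integrable (measure_pmf (joint_step T (fst sa) (snd sa))) (avoid_prob TD m)"
      by (rule measure_pmf.integrable_const_bound[where B=1]) (auto simp: avoid_prob_def)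
    show "AE s' in measure_pmf (joint_step T (fst sa) (snd sa)). avoid_prob TD m s' \<le> max_avoid_prob TD m"
      using assms set_joint_step[of "fst sa" "snd sa"] by (auto simp: AE_measure_pmf_iff intro!: avoid_prob_le_max)
  qed
  finally show ?thesis .
qed

lemma avoid_prob_submult:
  assumes s: "s \<in> joint_states"
  shows "avoid_prob TD (Suc k + m) s \<le> avoid_prob TD (Suc k) s * max_avoid_prob TD m"
proof -
  let ?F = "full_prefix T pol (Suc k) s"
  have "avoid_prob TD (Suc k + m) s
      = (\<integral>h. measure_pmf.prob (map_pmf (\<lambda>r. h @ r) (full_continuation T pol m (last h))) {xs. avoids TD xs} \<partial>measure_pmf ?F)"
    unfolding avoid_prob_def full_prefix_split by (rule measure_bind_pmf_real)
  also have "\<dots> \<le> (\<integral>h. indicator {xs. avoids TD xs} h * max_avoid_prob TD m \<partial>measure_pmf ?F)"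
  proof (rule integral_mono_AE)
    show "integrable (measure_pmf ?F)
        (\<lambda>h. measure_pmf.prob (map_pmf (\<lambda>r. h @ r) (full_continuation T pol m (last h))) {xs. avoids TD xs})"
      by (rule measure_pmf.integrable_const_bound[where B=1]) auto
    show "integrable (measure_pmf ?F) (\<lambda>h. indicator {xs. avoids TD xs} h * max_avoid_prob TD m)"
      by (rule integrable_measure_pmf_finite[OF finite_full_prefix[OF s]])
    have "measure_pmf.prob (full_continuation T pol m (last h)) {r. avoids TD h \<and> avoids TD r}
        \<le> indicator {xs. avoids TD xs} h * max_avoid_prob TD m" if h: "h \<in> set_pmf ?F" for h
      using avoid_prob_continuation_le[OF last_full_prefix[OF s h]] by (cases "avoids TD h") simp_all
    then show "AE h in measure_pmf ?F. measure_pmf.prob (map_pmf (\<lambda>r. h @ r) (full_continuation T pol m (last h)))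
        {xs. avoids TD xs} \<le> indicator {xs. avoids TD xs} h * max_avoid_prob TD m"
      by (simp add: AE_measure_pmf_iff vimage_def avoids_append)
  qed
  also have "\<dots> = avoid_prob TD (Suc k) s * max_avoid_prob TD m"
    by (simp add: avoid_prob_def)
  finally show ?thesis .
qed

lemma max_avoid_prob_power:
  assumes ne: "joint_states \<noteq> {}" and N: "N \<ge> 1" and b: "0 \<le> \<beta>"
    and le: "\<And>s. s \<in> joint_states \<Longrightarrow> avoid_prob TD N s \<le> \<beta>"
  shows "max_avoid_prob TD (j * N) \<le> \<beta> ^ j"
proof (induction j)
  case 0
  show ?case by (simp, rule max_avoid_prob_le[OF ne]) (simp add: avoid_prob_def)
next
  case (Suc j)
  obtain k where k: "N = Suc k" using N by (cases N) auto
  have "max_avoid_prob TD (Suc j * N) \<le> \<beta> * max_avoid_prob TD (j * N)"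
  proof (rule max_avoid_prob_le[OF ne])
    fix s assume s: "s \<in> joint_states"
    have "Suc j * N = Suc k + j * N" by (simp only: mult_Suc k)
    then have "avoid_prob TD (Suc j * N) s = avoid_prob TD (Suc k + j * N) s" by (rule arg_cong)
    also have "\<dots> \<le> avoid_prob TD (Suc k) s * max_avoid_prob TD (j * N)" by (rule avoid_prob_submult[OF s])
    also have "\<dots> \<le> \<beta> * max_avoid_prob TD (j * N)"
      using le[OF s] k max_avoid_prob_nonneg[OF ne] by (intro mult_right_mono) auto
    finally show "avoid_prob TD (Suc j * N) s \<le> \<beta> * max_avoid_prob TD (j * N)" .
  qed
  also have "\<dots> \<le> \<beta> * \<beta> ^ j" using Suc.IH b by (intro mult_left_mono) auto
  finally show ?case by simp
qed

lemma expected_trunc_len_le: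
  assumes sI: "sI \<in> joint_states" and N: "N \<ge> 1" and b: "0 \<le> \<beta>" "\<beta> < 1"
    and le: "\<And>s. s \<in> joint_states \<Longrightarrow> avoid_prob TD N s \<le> \<beta>"
  shows "(\<integral>xs. real (trunc_len TD n xs) \<partial>measure_pmf (full_prefix T pol n sI)) \<le> 1 + real N / (1 - \<beta>)"
proof -
  let ?F = "full_prefix T pol n sI"
  have ne: "joint_states \<noteq> {}" using sI by blast
  have int: "integrable (measure_pmf ?F) g" for g :: "_ \<Rightarrow> real"
    by (rule integrable_measure_pmf_finite[OF finite_full_prefix[OF sI]])
  have "(\<integral>xs. real (trunc_len TD n xs) \<partial>measure_pmf ?F)
      \<le> (\<integral>xs. 1 + (\<Sum>t<n. indicator {xs. avoids TD (take (Suc t) xs)} xs) \<partial>measure_pmf ?F)"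
    by (intro integral_mono_AE[OF int int])
       (simp add: AE_measure_pmf_iff trunc_len_le_sum_avoiding length_full_prefix)
  also have "\<dots> = 1 + (\<Sum>t<n. measure_pmf.prob ?F {xs. avoids TD (take (Suc t) xs)})"
    by (simp add: int integral_sum)
  also have "(\<Sum>t<n. measure_pmf.prob ?F {xs. avoids TD (take (Suc t) xs)}) = (\<Sum>t<n. avoid_prob TD (Suc t) sI)"
  proof (intro sum.cong refl)
    fix t assume t: "t \<in> {..<n}"
    have "measure_pmf.prob ?F {xs. avoids TD (take (Suc t) xs)} = measure_pmf.prob (map_pmf (take (Suc t)) ?F) {xs. avoids TD xs}"
      by (simp add: vimage_def)
    also have "\<dots> = avoid_prob TD (Suc t) sI" using t by (simp add: map_take_full_prefix avoid_prob_def)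
    finally show "measure_pmf.prob ?F {xs. avoids TD (take (Suc t) xs)} = avoid_prob TD (Suc t) sI" .
  qed
  also have "\<dots> \<le> (\<Sum>t<n. \<beta> ^ (t div N))"
  proof (rule sum_mono)
    fix t
    have "avoid_prob TD (Suc t) sI \<le> max_avoid_prob TD (t div N * N)"
      using avoid_prob_le_max[OF sI] max_avoid_prob_antimono[OF ne, of "t div N * N" "Suc t" TD]
      by (meson div_times_less_eq_dividend le_SucI order_trans)
    also have "\<dots> \<le> \<beta> ^ (t div N)" by (rule max_avoid_prob_power[OF ne N b(1) le])
    finally show "avoid_prob TD (Suc t) sI \<le> \<beta> ^ (t div N)" .
  qed
  also have "\<dots> \<le> real N / (1 - \<beta>)" by (rule sum_power_div_le[OF N b])
  finally show ?thesis by simp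
qed

lemma nn_integral_trunc_len:
  assumes "sI \<in> joint_states"
  shows "(\<integral>\<^sup>+xs. of_nat (trunc_len TD n xs) \<partial>measure_pmf (full_prefix T pol n sI))
       = ennreal (\<integral>xs. real (trunc_len TD n xs) \<partial>measure_pmf (full_prefix T pol n sI))"
  using nn_integral_eq_integral[OF integrable_measure_pmf_finite[OF finite_full_prefix[OF assms]],
      of "\<lambda>xs. real (trunc_len TD n xs)"]
  by (simp add: ennreal_of_nat_eq_real_of_nat)

lemma l_full_finite:
  assumes sI: "sI \<in> joint_states"
  shows "l_full T pol sI ST SA < \<infinity>"
proof -
  obtain N \<beta> where N: "N \<ge> 1" and b: "0 \<le> \<beta>" "\<beta> < 1"
    and le: "\<And>s. s \<in> joint_states \<Longrightarrow> avoid_prob (stop_states T pol ST SA) N s \<le> \<beta>"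
    using uniform_avoid_prob_lt_1 sI by blast
  have "l_full T pol sI ST SA \<le> ennreal (1 + real N / (1 - \<beta>))"
    unfolding l_full_def nn_integral_trunc_len[OF sI]
    using expected_trunc_len_le[OF sI N b le] by (intro SUP_least) (simp add: ennreal_leI)
  also have "\<dots> < \<infinity>" by simp
  finally show ?thesis .
qed

lemma expected_trunc_len_le_l_full:
  assumes sI: "sI \<in> joint_states"
  shows "(\<integral>xs. real (trunc_len (stop_states T pol ST SA) n xs) \<partial>measure_pmf (full_prefix T pol n sI))
           \<le> enn2real (l_full T pol sI ST SA)"
proof -
  have "ennreal (\<integral>xs. real (trunc_len (stop_states T pol ST SA) n xs) \<partial>measure_pmf (full_prefix T pol n sI))
      \<le> l_full T pol sI ST SA"
    unfolding nn_integral_trunc_len[OF sI, symmetric] l_full_def by (rule SUP_upper) simp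
  then have "enn2real (ennreal (\<integral>xs. real (trunc_len (stop_states T pol ST SA) n xs) \<partial>measure_pmf (full_prefix T pol n sI)))
      \<le> enn2real (l_full T pol sI ST SA)"
    by (rule enn2real_mono) (use l_full_finite[OF sI] in simp)
  then show ?thesis by simp
qed

lemma expected_success_time_le_l_full:
  assumes sI: "sI \<in> joint_states"
  shows "(\<Sum>xs\<in>set_pmf (full_prefix T pol n sI) \<inter> {xs. succ_prefix ST SA xs}.
            pmf (full_prefix T pol n sI) xs * real (success_time ST SA xs)) \<le> enn2real (l_full T pol sI ST SA)"
proof -
  let ?F = "full_prefix T pol n sI" and ?TD = "stop_states T pol ST SA"
  have fin: "finite (set_pmf ?F)" by (rule finite_full_prefix[OF sI])
  have "(\<Sum>xs\<in>set_pmf ?F \<inter> {xs. succ_prefix ST SA xs}. pmf ?F xs * real (success_time ST SA xs))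
      \<le> (\<Sum>xs\<in>set_pmf ?F \<inter> {xs. succ_prefix ST SA xs}. pmf ?F xs * real (trunc_len ?TD n xs))"
  proof (intro sum_mono mult_left_mono)
    fix xs assume "xs \<in> set_pmf ?F \<inter> {xs. succ_prefix ST SA xs}"
    then show "real (success_time ST SA xs) \<le> real (trunc_len ?TD n xs)"
      using success_time_lt_trunc_len[where xs=xs and n=n and s=sI] by fastforce
  qed simp
  also have "\<dots> \<le> (\<Sum>xs\<in>set_pmf ?F. pmf ?F xs * real (trunc_len ?TD n xs))"
    using fin by (intro sum_mono2) auto
  also have "\<dots> = (\<integral>xs. real (trunc_len ?TD n xs) \<partial>measure_pmf ?F)"
    by (rule integral_pmf_finite[OF fin, symmetric])
  also have "\<dots> \<le> enn2real (l_full T pol sI ST SA)" by (rule expected_trunc_len_le_l_full[OF sI])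
  finally show ?thesis .
qed


end

lemma jensen_power:
  fixes w m :: "'x \<Rightarrow> real" and q l :: real
  assumes finA: "finite A" and w0: "\<And>x. x \<in> A \<Longrightarrow> w x \<ge> 0" and V: "(\<Sum>x\<in>A. w x) > 0"
    and q: "0 < q" "q < 1" and ml: "(\<Sum>x\<in>A. w x * m x) \<le> l"
  shows "(\<Sum>x\<in>A. w x) * q powr (l / (\<Sum>x\<in>A. w x)) \<le> (\<Sum>x\<in>A. w x * q powr m x)"
proof -
  define V where "V = (\<Sum>x\<in>A. w x)"
  have Vp: "V > 0" using V by (simp add: V_def)
  have a1: "(\<Sum>x\<in>A. w x / V) = 1" using Vp by (simp add: sum_divide_distrib[symmetric] V_def)
  have "exp (\<Sum>x\<in>A. (w x / V) *\<^sub>R (m x * ln q)) \<le> (\<Sum>x\<in>A. (w x / V) * exp (m x * ln q))"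
    using V by (intro convex_on_sum[OF finA _ exp_convex a1]) (use w0 Vp in \<open>auto intro: divide_nonneg_pos\<close>)
  also have "(\<Sum>x\<in>A. (w x / V) *\<^sub>R (m x * ln q)) = ln q * ((\<Sum>x\<in>A. w x * m x) / V)"
    by (simp add: sum_divide_distrib sum_distrib_left mult_ac)
  also have "(\<Sum>x\<in>A. (w x / V) * exp (m x * ln q)) = (\<Sum>x\<in>A. w x * q powr m x) / V"
    using q by (simp add: sum_divide_distrib powr_def mult.commute)
  finally have jensen: "exp (ln q * ((\<Sum>x\<in>A. w x * m x) / V)) \<le> (\<Sum>x\<in>A. w x * q powr m x) / V" .
  have "ln q * (l / V) \<le> ln q * ((\<Sum>x\<in>A. w x * m x) / V)"
    using ml Vp q by (intro mult_left_mono_neg divide_right_mono) auto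
  then have "q powr (l / V) \<le> exp (ln q * ((\<Sum>x\<in>A. w x * m x) / V))"
    using q by (simp add: powr_def mult.commute)
  also note jensen
  finally show ?thesis using Vp unfolding V_def[symmetric] by (simp add: field_simps)
qed

lemma le_at_SUP_if_isCont:
  fixes g :: "real \<Rightarrow> real"
  assumes bdd: "bdd_above (range u)" and cont: "isCont g (SUP n. u n)" and le: "\<And>n. g (u n) \<le> w"
  shows "g (SUP n. u n) \<le> w"
proof (rule ccontr)
  let ?v = "SUP n. u n"
  assume "\<not> g ?v \<le> w"
  then obtain d where d: "d > 0" and dd: "\<And>y. dist y ?v < d \<Longrightarrow> dist (g y) (g ?v) < g ?v - w"
    using cont unfolding continuous_at_eps_delta by (metis diff_gt_0_iff_gt not_le)
  obtain n where "?v - d < u n" using less_cSUP_iff[OF _ bdd, of "?v - d"] d by auto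
  moreover have "u n \<le> ?v" by (rule cSUP_upper[OF _ bdd]) simp
  ultimately have "dist (g (u n)) (g ?v) < g ?v - w" using d by (intro dd) (simp add: dist_real_def)
  then show False using le[of n] by (simp add: dist_real_def)
qed

context finite_game
begin

lemma img_geo_prefix_succ_ge_power:
  fixes n :: nat and ST SA :: "('i \<Rightarrow> 's) set"
  assumes sI: "sI \<in> joint_states" and p: "0 \<le> p" "p \<le> 1"
  defines "v \<equiv> measure_pmf.prob (full_prefix T pol n sI) {xs. succ_prefix ST SA xs}"
  shows "v * (1 - p) powr (enn2real (l_full T pol sI ST SA) / v)
           \<le> measure_pmf.prob (img_geo_prefix T pol sI p n) {xs. succ_prefix ST SA xs}"
proof -
  let ?F = "full_prefix T pol n sI" and ?l = "enn2real (l_full T pol sI ST SA)"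
  define A where "A = set_pmf ?F \<inter> {xs. succ_prefix ST SA xs}"
  have finA: "finite A" using finite_full_prefix[OF sI] by (simp add: A_def)
  have vA: "v = (\<Sum>xs\<in>A. pmf ?F xs)"
    unfolding v_def A_def by (rule measure_pmf_eq_sum[OF finite_full_prefix[OF sI] order_refl])
  have img: "(\<Sum>xs\<in>A. pmf ?F xs * (1 - p) ^ success_time ST SA xs)
      \<le> measure_pmf.prob (img_geo_prefix T pol sI p n) {xs. succ_prefix ST SA xs}"
    unfolding A_def by (rule img_geo_prefix_succ_ge[OF sI p])
  have "0 \<le> v" by (simp add: v_def)
  then consider "v = 0 \<or> p = 1" | "p = 0" | "0 < v" "0 < p" "p < 1"
    using p by argo
  then show ?thesis
  proof cases
    case 1
    then show ?thesis by auto
  next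
    case 2
    then show ?thesis using img vA by simp
  next
    case 3
    have "v * (1 - p) powr (?l / v) \<le> (\<Sum>xs\<in>A. pmf ?F xs * (1 - p) powr real (success_time ST SA xs))"
      unfolding vA using 3 vA expected_success_time_le_l_full[OF sI]
      by (intro jensen_power[OF finA]) (simp_all add: A_def)
    also have "\<dots> = (\<Sum>xs\<in>A. pmf ?F xs * (1 - p) ^ success_time ST SA xs)"
      using 3 by (simp add: powr_realpow)
    finally show ?thesis using img by linarith
  qed
qed

lemma v_img_ge_power_bound:
  assumes sI: "sI \<in> joint_states" and p: "0 \<le> p" "p \<le> 1" and vpos: "v_full T pol sI ST SA > 0"
  shows "v_full T pol sI ST SA * (1 - p) powr (enn2real (l_full T pol sI ST SA) / v_full T pol sI ST SA)
           \<le> v_img T pol sI ST SA p"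
proof -
  let ?l = "enn2real (l_full T pol sI ST SA)"
  define u where "u n = measure_pmf.prob (full_prefix T pol n sI) {xs. succ_prefix ST SA xs}" for n
  define g where "g y = y * (1 - p) powr (?l / y)" for y :: real
  have v: "v_full T pol sI ST SA = (SUP n. u n)" by (simp add: v_full_def reach_prob_def u_def)
  have le: "g (u n) \<le> v_img T pol sI ST SA p" for n
    using img_geo_prefix_succ_ge_power[OF sI p, of n ST SA] reach_prob_ge[of "img_geo_prefix T pol sI p" n ST SA]
    unfolding g_def u_def v_img_def by linarith
  show ?thesis
  proof (cases "p = 1")
    case True
    then show ?thesis using le[of 0] by (simp add: g_def)
  next
    case False
    have "g (SUP n. u n) \<le> v_img T pol sI ST SA p"
    proof (rule le_at_SUP_if_isCont)
      show "g (u n) \<le> v_img T pol sI ST SA p" for n by (rule le)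
      show "bdd_above (range u)" by (intro bdd_aboveI[where M=1]) (auto simp: u_def)
      show "isCont g (SUP n. u n)"
        unfolding g_def using vpos False p v by (intro continuous_intros) auto
    qed
    then show ?thesis by (simp add: g_def v)
  qed
qed


end

theorem theorem2:
  fixes Sl :: "'i::finite \<Rightarrow> 's set" and Al :: "'i \<Rightarrow> 'a set" and sI :: "'i \<Rightarrow> 's"
    and T :: "'i \<Rightarrow> 's \<Rightarrow> 'a \<Rightarrow> 's pmf"
    and pol :: "('i \<Rightarrow> 's) \<Rightarrow> ('i \<Rightarrow> 'a) pmf"
    and ST SA :: "('i \<Rightarrow> 's) set" and p :: real
  assumes finS: "\<And>i. finite (Sl i)" and finA: "\<And>i. finite (Al i)"
    and init: "\<And>i. sI i \<in> Sl i"
    and trans: "\<And>i s a. s \<in> Sl i \<Longrightarrow> a \<in> Al i \<Longrightarrow> set_pmf (T i s a) \<subseteq> Sl i"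
    and policy: "\<And>s. (\<forall>i. s i \<in> Sl i) \<Longrightarrow> set_pmf (pol s) \<subseteq> {a. \<forall>i. a i \<in> Al i}"
    and vpos: "v_full T pol sI ST SA > 0"
    and p: "0 \<le> p" "p \<le> 1"
  shows "v_img T pol sI ST SA p \<ge>
           max (v_full T pol sI ST SA - sqrt (1 - exp_neg (total_corr T pol sI)))
               (v_full T pol sI ST SA *
                  (1 - p) powr (enn2real (l_full T pol sI ST SA) / v_full T pol sI ST SA))"
proof -
  interpret finite_game Sl Al T pol
    using finS finA trans policy by unfold_locales
  have sI: "sI \<in> joint_states" using init by (simp add: joint_states_def)
  show ?thesis
    using v_img_ge_v_full_minus_total_corr[OF sI] v_img_ge_power_bound[OF sI p vpos] by simp
qed

end
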